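(* Let $A$ be a closed densely defined operator in $\mathcal H$ and $G$ a bounded metric operator in $\mathcal H$ (with $G^{-1}$ possibly unbounded). Consider the conditions: (i) $GD(A)=D(A^* )$ and $A^*G\xi=GA\xi$ for every $\xi\in D(A)$; (ii) the operator $G^{1/2}AG^{-1/2}$, with domain $G^{1/2}D(A)$, is self-adjoint in $\mathcal H$; (iii) $A$ is self-adjoint in $\mathcal H(G)$; (iv) $GD(A)=D(G^{-1}A^* )$ and $A^*G\xi=GA\xi$ for every $\xi\in D(A)$. Then (i) $\Rightarrow$ (ii) $\Rightarrow$ (iii) $\Rightarrow$ (iv). If moreover the range $R(A^* )$ is contained in $D(G^{-1})$, then (i)–(iv) are equivalent.
   Context: A metric operator in $\mathcal H$ is a self-adjoint operator $G$ with $\langle G\xi,\xi\rangle>0$ for all nonzero $\xi\in D(G)$; $G^{-1}$, $G^{-1/2}$ denote the (possibly unbounded) inverses of $G$, $G^{1/2}$. For bounded metric $G$, $\mathcal H(G)$ is the completion of $\mathcal H$ under $\|\xi\|_G=\|G^{1/2}\xi\|$ with inner product $\langle\xi,\eta\rangle_G=\langle G^{1/2}\xi,G^{1/2}\eta\rangle$; $D(A)$ is dense in $\mathcal H(G)$, and "$A$ is self-adjoint in $\mathcal H(G)$" means $A=A^\#$, where $A^\#$ is the adjoint in $\mathcal H(G)$ of $A$ viewed as an operator in $\mathcal H(G)$ with domain $D(A)$. $D(G^{-1}A^* )=\{\zeta\in D(A^* ): A^*\zeta\in D(G^{-1})\}$. *)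

theory Defs
  imports "HOL-Analysis.Analysis"
begin

text \<open>The library has no complex inner product spaces, so we introduce a class of
complex Hilbert spaces: a complete real normed vector space with a complex scalar
multiplication extending the real one and a complex inner product (conjugate-linear
in the first argument) inducing the norm.\<close>

class complex_hilbert = real_normed_vector + complete_space +
  fixes scaleC :: "complex \<Rightarrow> 'a \<Rightarrow> 'a"
    and cinner :: "'a \<Rightarrow> 'a \<Rightarrow> complex"
  assumes scaleC_add_right: "scaleC c (x + y) = scaleC c x + scaleC c y"
    and scaleC_add_left: "scaleC (b + c) x = scaleC b x + scaleC c x"
    and scaleC_scaleC: "scaleC b (scaleC c x) = scaleC (b * c) x"
    and scaleC_one: "scaleC 1 x = x"
    and scaleR_scaleC: "scaleR r x = scaleC (complex_of_real r) x"
    and cinner_commute: "cinner x y = cnj (cinner y x)"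
    and cinner_add_left: "cinner (x + y) z = cinner x z + cinner y z"
    and cinner_scaleC_left: "cinner (scaleC c x) y = cnj c * cinner x y"
    and cinner_pos: "x \<noteq> 0 \<Longrightarrow> 0 < Re (cinner x x)"
    and norm_eq_sqrt_cinner: "norm x = sqrt (Re (cinner x x))"

text \<open>Sanity check: the class is consistent (\<open>\<complex>\<close> is an instance).\<close>
instantiation complex :: complex_hilbert
begin
definition scaleC_complex :: "complex \<Rightarrow> complex \<Rightarrow> complex" where
  "scaleC_complex c x = c * x"
definition cinner_complex :: "complex \<Rightarrow> complex \<Rightarrow> complex" where
  "cinner_complex x y = cnj x * y"
instance
proof
  fix x y z :: complex and b c :: complex and r :: real
  show "scaleC c (x + y) = scaleC c x + scaleC c y" by (simp add: scaleC_complex_def algebra_simps)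
  show "scaleC (b + c) x = scaleC b x + scaleC c x" by (simp add: scaleC_complex_def algebra_simps)
  show "scaleC b (scaleC c x) = scaleC (b * c) x" by (simp add: scaleC_complex_def algebra_simps)
  show "scaleC 1 x = x" by (simp add: scaleC_complex_def)
  show "scaleR r x = scaleC (complex_of_real r) x" by (simp add: scaleC_complex_def scaleR_conv_of_real)
  show "cinner x y = cnj (cinner y x)" by (simp add: cinner_complex_def)
  show "cinner (x + y) z = cinner x z + cinner y z" by (simp add: cinner_complex_def algebra_simps)
  show "cinner (scaleC c x) y = cnj c * cinner x y" by (simp add: cinner_complex_def scaleC_complex_def)
  show "x \<noteq> 0 \<Longrightarrow> 0 < Re (cinner x x)"
    by (simp add: cinner_complex_def complex_eq_iff) (metis not_real_square_gt_zero add_pos_nonneg add_nonneg_pos zero_le_square)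
  show "norm x = sqrt (Re (cinner x x))"
    by (simp add: cinner_complex_def cmod_def power2_eq_square)
qed
end

text \<open>An operator in \<open>\<H>\<close> is a pair (domain \<open>D\<close>, map \<open>f\<close>), only the values on \<open>D\<close> matter.\<close>

definition csubspace :: "'a::complex_hilbert set \<Rightarrow> bool" where
  "csubspace D \<longleftrightarrow> 0 \<in> D \<and> (\<forall>x\<in>D. \<forall>y\<in>D. x + y \<in> D) \<and> (\<forall>x\<in>D. \<forall>c. scaleC c x \<in> D)"

definition linear_op :: "'a::complex_hilbert set \<Rightarrow> ('a \<Rightarrow> 'a) \<Rightarrow> bool" where
  "linear_op D f \<longleftrightarrow> csubspace D \<and> (\<forall>x\<in>D. \<forall>y\<in>D. f (x + y) = f x + f y)
     \<and> (\<forall>x\<in>D. \<forall>c. f (scaleC c x) = scaleC c (f x))"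

definition densely_defined :: "'a::complex_hilbert set \<Rightarrow> bool" where
  "densely_defined D \<longleftrightarrow> closure D = UNIV"

definition op_graph :: "'a set \<Rightarrow> ('a \<Rightarrow> 'a) \<Rightarrow> ('a \<times> 'a) set" where
  "op_graph D f = {(x, f x) | x. x \<in> D}"

definition closed_op :: "'a::complex_hilbert set \<Rightarrow> ('a \<Rightarrow> 'a) \<Rightarrow> bool" where
  "closed_op D f \<longleftrightarrow> linear_op D f \<and> closed (op_graph D f)"

definition adj_graph :: "'a::complex_hilbert set \<Rightarrow> ('a \<Rightarrow> 'a) \<Rightarrow> ('a \<times> 'a) set" where
  "adj_graph D f = {(\<eta>, \<zeta>). \<forall>\<xi>\<in>D. cinner (f \<xi>) \<eta> = cinner \<xi> \<zeta>}"

definition adj_dom :: "'a::complex_hilbert set \<Rightarrow> ('a \<Rightarrow> 'a) \<Rightarrow> 'a set" where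
  "adj_dom D f = Domain (adj_graph D f)"

definition adj :: "'a::complex_hilbert set \<Rightarrow> ('a \<Rightarrow> 'a) \<Rightarrow> 'a \<Rightarrow> 'a" where
  "adj D f \<eta> = (THE \<zeta>. (\<eta>, \<zeta>) \<in> adj_graph D f)"

definition self_adjoint :: "'a::complex_hilbert set \<Rightarrow> ('a \<Rightarrow> 'a) \<Rightarrow> bool" where
  "self_adjoint D f \<longleftrightarrow> densely_defined D \<and> adj_graph D f = op_graph D f"

definition bounded_clinear_op :: "('a::complex_hilbert \<Rightarrow> 'a) \<Rightarrow> bool" where
  "bounded_clinear_op G \<longleftrightarrow> linear_op UNIV G \<and> (\<exists>K. \<forall>x. norm (G x) \<le> norm x * K)"

definition bounded_metric_op :: "('a::complex_hilbert \<Rightarrow> 'a) \<Rightarrow> bool" where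
  "bounded_metric_op G \<longleftrightarrow> bounded_clinear_op G \<and> (\<forall>x y. cinner (G x) y = cinner x (G y))
     \<and> (\<forall>x. x \<noteq> 0 \<longrightarrow> 0 < Re (cinner (G x) x))"

definition op_sqrt :: "('a::complex_hilbert \<Rightarrow> 'a) \<Rightarrow> 'a \<Rightarrow> 'a" where
  "op_sqrt G = (THE S. bounded_clinear_op S \<and> (\<forall>x y. cinner (S x) y = cinner x (S y))
      \<and> (\<forall>x. 0 \<le> Re (cinner (S x) x)) \<and> (\<forall>x. S (S x) = G x))"

text \<open>\<open>D(G\<^sup>-\<^sup>1) = R(G)\<close>, and \<open>D(G\<^sup>-\<^sup>1A\<^sup>*) = {\<zeta> \<in> D(A\<^sup>*). A\<^sup>*\<zeta> \<in> D(G\<^sup>-\<^sup>1)}\<close>.\<close>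
definition dom_Ginv_adj :: "('a::complex_hilbert \<Rightarrow> 'a) \<Rightarrow> 'a set \<Rightarrow> ('a \<Rightarrow> 'a) \<Rightarrow> 'a set" where
  "dom_Ginv_adj G D f = {\<zeta> \<in> adj_dom D f. adj D f \<zeta> \<in> range G}"

text \<open>\<open>\<H>(G)\<close> is the completion of \<open>\<H>\<close> under \<open>\<parallel>\<xi>\<parallel>\<^sub>G = \<parallel>G\<^sup>1\<^sup>/\<^sup>2\<xi>\<parallel>\<close>.
We realise it concretely: its elements are represented by \<open>\<parallel>\<cdot>\<parallel>\<^sub>G\<close>-Cauchy sequences in \<open>\<H>\<close>,
two sequences representing the same element iff their difference tends to 0 in \<open>\<parallel>\<cdot>\<parallel>\<^sub>G\<close>;
\<open>\<H>\<close> embeds via constant sequences, and the inner product is the limit of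
\<open>\<langle>\<cdot>,\<cdot>\<rangle>\<^sub>G\<close>.\<close>

definition ginner :: "('a::complex_hilbert \<Rightarrow> 'a) \<Rightarrow> 'a \<Rightarrow> 'a \<Rightarrow> complex" where
  "ginner G x y = cinner (op_sqrt G x) (op_sqrt G y)"

definition gcauchy :: "('a::complex_hilbert \<Rightarrow> 'a) \<Rightarrow> (nat \<Rightarrow> 'a) \<Rightarrow> bool" where
  "gcauchy G x \<longleftrightarrow> Cauchy (\<lambda>n. op_sqrt G (x n))"

definition gequiv :: "('a::complex_hilbert \<Rightarrow> 'a) \<Rightarrow> (nat \<Rightarrow> 'a) \<Rightarrow> (nat \<Rightarrow> 'a) \<Rightarrow> bool" where
  "gequiv G x y \<longleftrightarrow> (\<lambda>n. op_sqrt G (x n - y n)) \<longlonglongrightarrow> 0"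

definition gadj_graph :: "('a::complex_hilbert \<Rightarrow> 'a) \<Rightarrow> 'a set \<Rightarrow> ('a \<Rightarrow> 'a)
    \<Rightarrow> ((nat \<Rightarrow> 'a) \<times> (nat \<Rightarrow> 'a)) set" where
  "gadj_graph G D f = {(\<eta>, \<zeta>). gcauchy G \<eta> \<and> gcauchy G \<zeta> \<and>
     (\<forall>\<xi>\<in>D. lim (\<lambda>n. ginner G (f \<xi>) (\<eta> n)) = lim (\<lambda>n. ginner G \<xi> (\<zeta> n)))}"

text \<open>\<open>A = A\<^sup>#\<close> in \<open>\<H>(G)\<close>: the graph of \<open>A\<^sup>#\<close> equals the (embedded) graph of \<open>A\<close>, modulo
the identification of representatives.\<close>
definition self_adjoint_in_HG :: "('a::complex_hilbert \<Rightarrow> 'a) \<Rightarrow> 'a set \<Rightarrow> ('a \<Rightarrow> 'a) \<Rightarrow> bool" where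
  "self_adjoint_in_HG G D f \<longleftrightarrow>
     (\<forall>\<xi>\<in>D. ((\<lambda>_. \<xi>), (\<lambda>_. f \<xi>)) \<in> gadj_graph G D f) \<and>
     (\<forall>\<eta> \<zeta>. (\<eta>, \<zeta>) \<in> gadj_graph G D f \<longrightarrow>
        (\<exists>\<xi>\<in>D. gequiv G \<eta> (\<lambda>_. \<xi>) \<and> gequiv G \<zeta> (\<lambda>_. f \<xi>)))"

end

theory Submission
  imports Defs
begin

text \<open>The positive square root of \<open>G\<close> comes from a monotone iteration: for the positive
  contraction \<open>C = I - G/k\<close> the iterates \<open>Y\<^sub>n\<^sub>+\<^sub>1 = (C + Y\<^sub>n\<^sup>2)/2\<close> and their increments are polynomials
  in \<open>C\<close> with nonnegative coefficients, hence positive, so they converge strongly to some \<open>Y\<close>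
  with \<open>(I - Y)\<^sup>2 = I - C\<close>. Since \<open>G\<^sup>1\<^sup>/\<^sup>2\<close> is injective with dense range, \<open>\<xi> \<mapsto> G\<^sup>1\<^sup>/\<^sup>2\<xi>\<close>
  extends to a unitary from \<open>\<H>(G)\<close> onto \<open>\<H>\<close> carrying \<open>A\<close> to \<open>B = G\<^sup>1\<^sup>/\<^sup>2AG\<^sup>-\<^sup>1\<^sup>/\<^sup>2\<close>, so
  (ii) and (iii) are equivalent. The graph of \<open>B\<^sup>*\<close> is the preimage of the graph of \<open>A\<^sup>*\<close> under
  \<open>G\<^sup>1\<^sup>/\<^sup>2 \<times> G\<^sup>1\<^sup>/\<^sup>2\<close>, which gives (i) \<open>\<Longrightarrow>\<close> (ii). If \<open>B\<close> is self-adjoint then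
  \<open>\<H> = R(B + i) \<subseteq> R(G\<^sup>1\<^sup>/\<^sup>2)\<close>, so every \<open>\<zeta> \<in> D(G\<^sup>-\<^sup>1A\<^sup>*)\<close> is of the form \<open>G\<^sup>1\<^sup>/\<^sup>2p\<close> with
  \<open>(p, G\<^sup>1\<^sup>/\<^sup>2w)\<close> in the graph of \<open>B\<^sup>* = B\<close>; this is (ii) \<open>\<Longrightarrow>\<close> (iv). When \<open>R(A\<^sup>*) \<subseteq> R(G)\<close>
  the domains in (i) and (iv) coincide.\<close>

section \<open>Complex inner product spaces\<close>

lemma scaleC_zero_right [simp]: "scaleC c (0::'a::complex_hilbert) = 0"
  using scaleC_add_right[of c "0::'a" 0] by simp

lemma scaleC_zero_left [simp]: "scaleC 0 (x::'a::complex_hilbert) = 0"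
  using scaleR_scaleC[of 0 x] by simp

lemma scaleC_minus_one: "scaleC (-1) (x::'a::complex_hilbert) = - x"
  using scaleR_scaleC[of "-1" x] by simp

lemma scaleC_minus_right: "scaleC c (- (x::'a::complex_hilbert)) = - scaleC c x"
  using scaleC_scaleC[of c "-1" x] scaleC_scaleC[of "-1" c x] by (simp add: scaleC_minus_one)

lemma scaleC_diff_right: "scaleC c ((x::'a::complex_hilbert) - y) = scaleC c x - scaleC c y"
  using scaleC_add_right[of c x "-y"] by (simp add: scaleC_minus_right)

lemma cinner_add_right: "cinner (x::'a::complex_hilbert) (y + z) = cinner x y + cinner x z"
  using cinner_commute[of x "y + z"] cinner_commute[of y x] cinner_commute[of z x]
    cinner_add_left[of y z x] by simp

lemma cinner_scaleC_right: "cinner (x::'a::complex_hilbert) (scaleC c y) = c * cinner x y"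
  using cinner_commute[of x "scaleC c y"] cinner_commute[of y x] cinner_scaleC_left[of c y x] by simp

lemma cinner_zero_left [simp]: "cinner 0 (y::'a::complex_hilbert) = 0"
  using cinner_add_left[of "0::'a" 0 y] by simp

lemma cinner_zero_right [simp]: "cinner (x::'a::complex_hilbert) 0 = 0"
  using cinner_add_right[of x "0::'a" 0] by simp

lemma cinner_minus_left: "cinner (- x) (y::'a::complex_hilbert) = - cinner x y"
  using cinner_add_left[of x "- x" y] by (simp add: eq_neg_iff_add_eq_0 add.commute)

lemma cinner_minus_right: "cinner (x::'a::complex_hilbert) (- y) = - cinner x y"
  using cinner_add_right[of x y "- y"] by (simp add: eq_neg_iff_add_eq_0 add.commute)

lemma cinner_diff_left: "cinner (x - y) (z::'a::complex_hilbert) = cinner x z - cinner y z"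
  using cinner_add_left[of x "- y" z] by (simp add: cinner_minus_left)

lemma cinner_diff_right: "cinner (x::'a::complex_hilbert) (y - z) = cinner x y - cinner x z"
  using cinner_add_right[of x y "- z"] by (simp add: cinner_minus_right)

lemma cinner_scaleR_left: "cinner (scaleR r x) (y::'a::complex_hilbert) = of_real r * cinner x y"
  by (simp add: scaleR_scaleC cinner_scaleC_left)

lemma cinner_scaleR_right: "cinner (x::'a::complex_hilbert) (scaleR r y) = of_real r * cinner x y"
  by (simp add: scaleR_scaleC cinner_scaleC_right)

lemma Re_cinner_self: "Re (cinner x x) = (norm (x::'a::complex_hilbert))\<^sup>2"
proof -
  have "0 \<le> Re (cinner x x)" using cinner_pos[of x] by (cases "x = 0") auto
  thus ?thesis by (simp add: norm_eq_sqrt_cinner)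
qed

lemma cinner_self: "cinner x x = of_real ((norm (x::'a::complex_hilbert))\<^sup>2)"
proof -
  have "Im (cinner x x) = 0"
    using arg_cong[OF cinner_commute[of x x], of Im] by simp
  thus ?thesis by (simp add: complex_eq_iff Re_cinner_self)
qed

lemma cinner_self_eq_0 [simp]: "cinner x x = 0 \<longleftrightarrow> (x::'a::complex_hilbert) = 0"
  by (simp add: cinner_self)

lemma norm_scaleC: "norm (scaleC c (x::'a::complex_hilbert)) = cmod c * norm x"
proof -
  have "complex_of_real ((norm (scaleC c x))\<^sup>2) = cinner (scaleC c x) (scaleC c x)"
    by (simp add: cinner_self)
  also have "\<dots> = (cnj c * c) * cinner x x"
    by (simp add: cinner_scaleC_left cinner_scaleC_right)
  also have "\<dots> = complex_of_real ((cmod c * norm x)\<^sup>2)"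
    using complex_norm_square[of c] by (simp add: cinner_self power_mult_distrib mult.commute)
  finally have "(norm (scaleC c x))\<^sup>2 = (cmod c * norm x)\<^sup>2" by (simp only: of_real_eq_iff)
  thus ?thesis by (rule power2_eq_imp_eq) auto
qed

lemma parallelogram_law:
  "(norm (a - b))\<^sup>2 + (norm (a + b))\<^sup>2 = 2 * (norm (a::'a::complex_hilbert))\<^sup>2 + 2 * (norm b)\<^sup>2"
proof -
  have "complex_of_real ((norm (a - b))\<^sup>2 + (norm (a + b))\<^sup>2) = cinner (a - b) (a - b) + cinner (a + b) (a + b)"
    by (simp add: cinner_self)
  also have "\<dots> = 2 * cinner a a + 2 * cinner b b"
    by (simp add: cinner_diff_left cinner_diff_right cinner_add_left cinner_add_right)
  also have "\<dots> = complex_of_real (2 * (norm a)\<^sup>2 + 2 * (norm b)\<^sup>2)" by (simp add: cinner_self)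
  finally show ?thesis by (simp only: of_real_eq_iff)
qed

section \<open>Bounded operators\<close>

definition clinear :: "('a::complex_hilbert \<Rightarrow> 'a) \<Rightarrow> bool" where
  "clinear T \<longleftrightarrow> (\<forall>x y. T (x + y) = T x + T y) \<and> (\<forall>c x. T (scaleC c x) = scaleC c (T x))"

definition hermitian :: "('a::complex_hilbert \<Rightarrow> 'a) \<Rightarrow> bool" where
  "hermitian T \<longleftrightarrow> (\<forall>x y. cinner (T x) y = cinner x (T y))"

definition positive_op :: "('a::complex_hilbert \<Rightarrow> 'a) \<Rightarrow> bool" where
  "positive_op T \<longleftrightarrow> (\<forall>x. 0 \<le> Re (cinner (T x) x))"

lemma clinear_add: "clinear T \<Longrightarrow> T (x + y) = T x + T y"
  unfolding clinear_def by auto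

lemma clinear_scaleC: "clinear T \<Longrightarrow> T (scaleC c x) = scaleC c (T x)"
  unfolding clinear_def by auto

lemma clinear_scaleR: "clinear T \<Longrightarrow> T (scaleR r x) = scaleR r (T x)"
  by (simp add: scaleR_scaleC clinear_scaleC)

lemma clinear_zero: "clinear T \<Longrightarrow> T 0 = 0"
  using clinear_add[of T 0 0] by simp

lemma clinear_diff: "clinear T \<Longrightarrow> T (x - y) = T x - T y"
  using clinear_add[of T x "- y"] clinear_scaleC[of T "-1" y] by (simp add: scaleC_minus_one)

lemma clinear_id: "clinear (\<lambda>x. x)"
  unfolding clinear_def by simp

lemma clinear_scaleC_op: "clinear (scaleC c)"
  unfolding clinear_def by (simp add: scaleC_add_right scaleC_scaleC mult.commute)

lemma clinear_lincomb:
  "clinear T \<Longrightarrow> clinear U \<Longrightarrow> clinear (\<lambda>x. scaleR a (T x) + scaleR b (U x))"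
  unfolding clinear_def
  by (simp add: scaleR_scaleC scaleC_add_right scaleC_scaleC mult.commute)

lemma hermitian_symmetric: "hermitian T \<Longrightarrow> cinner (T x) y = cinner x (T y)"
  unfolding hermitian_def by blast

lemma positive_opD: "positive_op T \<Longrightarrow> 0 \<le> Re (cinner (T x) x)"
  unfolding positive_op_def by blast

lemma bounded_clinear_op_iff:
  "bounded_clinear_op T \<longleftrightarrow> clinear T \<and> (\<exists>K. \<forall>x. norm (T x) \<le> norm x * K)"
  unfolding bounded_clinear_op_def linear_op_def csubspace_def clinear_def by auto

lemma bounded_clinear_op_bounded_linear: "bounded_clinear_op T \<Longrightarrow> bounded_linear T"
proof -
  assume T: "bounded_clinear_op T"
  then obtain K where K: "\<And>x. norm (T x) \<le> norm x * K" unfolding bounded_clinear_op_iff by blast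
  show ?thesis
    using T by (intro bounded_linear_intro[where K=K])
      (simp_all add: bounded_clinear_op_iff clinear_add clinear_scaleR K)
qed

lemma bounded_clinear_op_tendsto:
  "bounded_clinear_op T \<Longrightarrow> (f \<longlongrightarrow> a) F \<Longrightarrow> ((\<lambda>n. T (f n)) \<longlongrightarrow> T a) F"
  using bounded_linear.tendsto[OF bounded_clinear_op_bounded_linear] by blast

lemma bounded_clinear_op_scaleC: "bounded_clinear_op (scaleC c)"
  unfolding bounded_clinear_op_iff
  by (auto intro: clinear_scaleC_op exI[of _ "cmod c"] simp: norm_scaleC mult.commute)

lemma bounded_clinear_op_scaleR_op:
  assumes "bounded_clinear_op T" shows "bounded_clinear_op (\<lambda>x. r *\<^sub>R T x)"
proof -
  obtain K where L: "clinear T" and K: "\<And>x. norm (T x) \<le> norm x * K"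
    using assms unfolding bounded_clinear_op_iff by blast
  have "norm (r *\<^sub>R T x) \<le> norm x * (\<bar>r\<bar> * K)" for x
    using mult_left_mono[OF K[of x], of "\<bar>r\<bar>"] by (simp add: ac_simps)
  thus ?thesis unfolding bounded_clinear_op_iff using clinear_lincomb[OF L L, of r 0] by auto
qed

lemma hermitian_scaleR_op: "hermitian T \<Longrightarrow> hermitian (\<lambda>x. r *\<^sub>R T x)"
  unfolding hermitian_def by (simp add: cinner_scaleR_left cinner_scaleR_right)

lemma positive_op_scaleR_op: "0 \<le> r \<Longrightarrow> positive_op T \<Longrightarrow> positive_op (\<lambda>x. r *\<^sub>R T x)"
  unfolding positive_op_def by (simp add: cinner_scaleR_left)

lemma quadratic_nonneg_discriminant:
  fixes a b q :: real
  assumes "0 \<le> b" and nonneg: "\<And>t. 0 \<le> a + 2 * t * q + t\<^sup>2 * q * b"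
  shows "q \<le> a * b"
proof (cases "b = 0")
  case True
  show ?thesis
  proof (rule ccontr)
    assume "\<not> q \<le> a * b"
    hence "q > 0" using True by simp
    have "0 \<le> a + 2 * (- (a + 1) / (2 * q)) * q" using nonneg[of "- (a + 1) / (2 * q)"] True by simp
    also have "\<dots> = -1" using \<open>q > 0\<close> by (simp add: field_simps)
    finally show False by simp
  qed
next
  case False
  hence "b > 0" using assms(1) by simp
  have "0 \<le> a + 2 * (- 1 / b) * q + (- 1 / b)\<^sup>2 * q * b" by (rule nonneg)
  also have "\<dots> = a - q / b" using \<open>b > 0\<close> by (simp add: field_simps power2_eq_square)
  finally show ?thesis using \<open>b > 0\<close> by (simp add: field_simps)
qed

lemma positive_op_Cauchy_Schwarz:
  assumes L: "clinear T" and H: "hermitian T" and P: "positive_op T"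
  shows "(cmod (cinner (T x) y))\<^sup>2 \<le> Re (cinner (T x) x) * Re (cinner (T y) y)"
proof -
  define c where "c = cinner (T x) y"
  define q where "q = (cmod c)\<^sup>2"
  define a where "a = Re (cinner (T x) x)"
  define b where "b = Re (cinner (T y) y)"
  have "b \<ge> 0" using P unfolding b_def positive_op_def by auto
  have cc: "cnj c * c = of_real q"
    unfolding q_def using complex_norm_square[of c] by (simp add: mult.commute)
  have "cinner (T y) x = cnj c"
    unfolding c_def using cinner_commute[of "T y" x] H by (simp add: hermitian_symmetric)
  have quadratic: "0 \<le> a + 2 * t * q + t\<^sup>2 * q * b" for t :: real
  proof -
    define z where "z = x + scaleC (of_real t * cnj c) y"
    have "cinner (T z) z = cinner (T x) x + of_real t * cnj c * c + of_real t * c * cinner (T y) x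
        + of_real t * c * (of_real t * cnj c) * cinner (T y) y"
      unfolding z_def using L
      by (simp add: clinear_add clinear_scaleC cinner_add_left cinner_add_right cinner_scaleC_left
          cinner_scaleC_right c_def algebra_simps)
    also have "\<dots> = cinner (T x) x + of_real (2 * t * q) + of_real (t\<^sup>2 * q) * cinner (T y) y"
      using \<open>cinner (T y) x = cnj c\<close> cc
      by (simp add: algebra_simps power2_eq_square) (simp add: mult.assoc[symmetric] mult.commute[of c])
    finally have "Re (cinner (T z) z) = a + 2 * t * q + t\<^sup>2 * q * b" by (simp add: a_def b_def)
    thus ?thesis using positive_opD[OF P, of z] by simp
  qed
  have "q \<le> a * b" by (rule quadratic_nonneg_discriminant[OF \<open>b \<ge> 0\<close> quadratic])
  thus ?thesis unfolding q_def c_def a_def b_def .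
qed

lemma cinner_Cauchy_Schwarz: "cmod (cinner x y) \<le> norm (x::'a::complex_hilbert) * norm y"
proof -
  have "clinear (\<lambda>x::'a. x)" "hermitian (\<lambda>x::'a. x)" "positive_op (\<lambda>x::'a. x)"
    by (simp_all add: clinear_id hermitian_def positive_op_def Re_cinner_self)
  from positive_op_Cauchy_Schwarz[OF this, of x y]
  have "(cmod (cinner x y))\<^sup>2 \<le> (norm x * norm y)\<^sup>2"
    by (simp add: Re_cinner_self power_mult_distrib)
  thus ?thesis by (rule power2_le_imp_le) simp
qed

lemma Re_cinner_le_norm_mult: "Re (cinner x y) \<le> norm (x::'a::complex_hilbert) * norm y"
  using complex_Re_le_cmod cinner_Cauchy_Schwarz order_trans by blast

lemma bounded_bilinear_cinner: "bounded_bilinear (cinner :: 'a::complex_hilbert \<Rightarrow> 'a \<Rightarrow> complex)"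
proof
  fix a a' b b' :: 'a and r :: real
  show "cinner (a + a') b = cinner a b + cinner a' b" by (rule cinner_add_left)
  show "cinner a (b + b') = cinner a b + cinner a b'" by (rule cinner_add_right)
  show "cinner (r *\<^sub>R a) b = r *\<^sub>R cinner a b" by (simp add: cinner_scaleR_left scaleR_conv_of_real)
  show "cinner a (r *\<^sub>R b) = r *\<^sub>R cinner a b" by (simp add: cinner_scaleR_right scaleR_conv_of_real)
  show "\<exists>K. \<forall>a b. norm (cinner a b) \<le> norm a * norm b * K"
    by (rule exI[of _ 1]) (simp add: cinner_Cauchy_Schwarz)
qed

lemmas tendsto_cinner = bounded_bilinear.tendsto[OF bounded_bilinear_cinner]

lemma positive_op_norm_bound:
  assumes L: "clinear T" and H: "hermitian T" and P: "positive_op T"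
    and M: "\<And>y. norm (T y) \<le> M * norm y"
  shows "(norm (T x))\<^sup>2 \<le> M * Re (cinner (T x) x)"
proof -
  have "((norm (T x))\<^sup>2)\<^sup>2 = (cmod (cinner (T x) (T x)))\<^sup>2" by (simp add: cinner_self norm_power)
  also have "\<dots> \<le> Re (cinner (T x) x) * Re (cinner (T (T x)) (T x))"
    by (rule positive_op_Cauchy_Schwarz[OF L H P])
  also have "\<dots> \<le> Re (cinner (T x) x) * (M * (norm (T x))\<^sup>2)"
  proof (rule mult_left_mono[OF _ positive_opD[OF P]])
    have "Re (cinner (T (T x)) (T x)) \<le> norm (T (T x)) * norm (T x)" by (rule Re_cinner_le_norm_mult)
    also have "\<dots> \<le> M * norm (T x) * norm (T x)" using M[of "T x"] by (simp add: mult_right_mono)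
    finally show "Re (cinner (T (T x)) (T x)) \<le> M * (norm (T x))\<^sup>2" by (simp add: power2_eq_square)
  qed
  finally have "(norm (T x))\<^sup>2 * (norm (T x))\<^sup>2 \<le> (M * Re (cinner (T x) x)) * (norm (T x))\<^sup>2"
    by (simp add: power2_eq_square ac_simps)
  thus ?thesis
    by (cases "T x = 0") (auto intro: mult_right_le_imp_le[of _ "(norm (T x))\<^sup>2"])
qed

section \<open>Closest points in closed subspaces\<close>

lemma csubspace_scaleR: "csubspace M \<Longrightarrow> x \<in> M \<Longrightarrow> scaleR r x \<in> M"
  unfolding csubspace_def by (simp add: scaleR_scaleC)

lemma csubspace_closure:
  assumes "csubspace M" shows "csubspace (closure M)"
  unfolding csubspace_def
proof (intro conjI ballI allI)
  show "0 \<in> closure M" using assms closure_subset unfolding csubspace_def by blast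
next
  fix x y assume "x \<in> closure M" "y \<in> closure M"
  then obtain f g where f: "\<forall>n. f n \<in> M" "f \<longlonglongrightarrow> x" and g: "\<forall>n. g n \<in> M" "g \<longlonglongrightarrow> y"
    unfolding closure_sequential by blast
  have "\<forall>n. f n + g n \<in> M" using f g assms unfolding csubspace_def by blast
  moreover have "(\<lambda>n. f n + g n) \<longlonglongrightarrow> x + y" by (intro tendsto_intros f g)
  ultimately show "x + y \<in> closure M"
    unfolding closure_sequential by (intro exI[of _ "\<lambda>n. f n + g n"]) blast
next
  fix x c assume "x \<in> closure M"
  then obtain f where f: "\<forall>n. f n \<in> M" "f \<longlonglongrightarrow> x" unfolding closure_sequential by blast
  have "\<forall>n. scaleC c (f n) \<in> M" using f assms unfolding csubspace_def by blast
  moreover have "(\<lambda>n. scaleC c (f n)) \<longlonglongrightarrow> scaleC c x"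
    by (rule bounded_clinear_op_tendsto[OF bounded_clinear_op_scaleC f(2)])
  ultimately show "scaleC c x \<in> closure M"
    unfolding closure_sequential by (intro exI[of _ "\<lambda>n. scaleC c (f n)"]) blast
qed

lemma Cauchy_if_dist_squared_le:
  fixes X :: "nat \<Rightarrow> 'a::metric_space"
  assumes e: "e \<longlonglongrightarrow> 0" and le: "\<And>m n. (dist (X m) (X n))\<^sup>2 \<le> e m + e n"
  shows "Cauchy X"
proof (rule metric_CauchyI)
  fix r :: real assume "r > 0"
  then obtain N where N: "\<And>n. n \<ge> N \<Longrightarrow> norm (e n) < r\<^sup>2 / 2"
    using e unfolding LIMSEQ_iff by (metis diff_zero half_gt_zero zero_less_power)
  have "dist (X m) (X n) < r" if "m \<ge> N" "n \<ge> N" for m n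
  proof (rule power2_less_imp_less)
    show "(dist (X m) (X n))\<^sup>2 < r\<^sup>2" using le[of m n] N[OF that(1)] N[OF that(2)] by auto
  qed (use \<open>r > 0\<close> in simp)
  thus "\<exists>N. \<forall>m\<ge>N. \<forall>n\<ge>N. dist (X m) (X n) < r" by blast
qed

lemma Cauchy_if_dist_le:
  assumes "Cauchy X" "\<And>m n. dist (Y m) (Y n) \<le> dist (X m) (X n)"
  shows "Cauchy Y"
  using assms unfolding Cauchy_def by (meson le_less_trans)

lemma closest_point_exists:
  fixes x :: "'a::complex_hilbert"
  assumes M: "csubspace M" "closed M"
  obtains m where "m \<in> M" "\<And>y. y \<in> M \<Longrightarrow> norm (x - m) \<le> norm (x - y)"
proof -
  define f where "f m = norm (x - m)" for m
  define d where "d = Inf (f ` M)"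
  have ne: "f ` M \<noteq> {}" using M(1) unfolding csubspace_def by auto
  have low: "d \<le> f y" if "y \<in> M" for y
    unfolding d_def using that by (intro cInf_lower bdd_belowI[of _ 0]) (auto simp: f_def)
  have d0: "d \<ge> 0" unfolding d_def by (rule cInf_greatest[OF ne]) (auto simp: f_def)
  have "\<exists>m\<in>M. f m < d + 1 / real (Suc n)" for n
    using cInf_lessD[OF ne, of "d + 1 / real (Suc n)"] unfolding d_def by auto
  then obtain ms where ms: "\<And>n. ms n \<in> M" "\<And>n. f (ms n) < d + 1 / real (Suc n)" by metis
  have fd: "(\<lambda>n. f (ms n)) \<longlonglongrightarrow> d"
  proof (rule tendsto_sandwich[of "\<lambda>_. d" _ _ "\<lambda>n. d + 1 / real (Suc n)"])
    show "(\<lambda>n. d + 1 / real (Suc n)) \<longlonglongrightarrow> d"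
      using tendsto_add[OF tendsto_const lim_1_over_real_power[of 1, THEN LIMSEQ_Suc], of d] by simp
  qed (use low ms in \<open>auto intro!: always_eventually less_imp_le\<close>)
  define e where "e n = 2 * ((f (ms n))\<^sup>2 - d\<^sup>2)" for n
  have "Cauchy ms"
  proof (rule Cauchy_if_dist_squared_le)
    have "e \<longlonglongrightarrow> 2 * (d\<^sup>2 - d\<^sup>2)" unfolding e_def by (intro tendsto_intros fd)
    thus "e \<longlonglongrightarrow> 0" by simp
    fix i j
    have "scaleR (1/2) (ms i + ms j) \<in> M"
      using M(1) ms(1) by (simp add: csubspace_scaleR csubspace_def)
    moreover have "(x - ms i) + (x - ms j) = 2 *\<^sub>R (x - scaleR (1/2) (ms i + ms j))"
      by (simp add: algebra_simps scaleR_2)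
    ultimately have "2 * d \<le> norm ((x - ms i) + (x - ms j))"
      using low[of "scaleR (1/2) (ms i + ms j)"] unfolding f_def by simp
    hence "(2 * d)\<^sup>2 \<le> (norm ((x - ms i) + (x - ms j)))\<^sup>2" using d0 by (intro power_mono) auto
    thus "(dist (ms i) (ms j))\<^sup>2 \<le> e i + e j"
      using parallelogram_law[of "x - ms i" "x - ms j"]
      by (simp add: e_def f_def dist_norm norm_minus_commute power_mult_distrib)
  qed
  then obtain m0 where lim: "ms \<longlonglongrightarrow> m0" using Cauchy_convergent_iff convergent_def by blast
  have "m0 \<in> M" using closed_sequentially[OF M(2)] ms(1) lim by blast
  moreover have "(\<lambda>n. f (ms n)) \<longlonglongrightarrow> f m0" unfolding f_def by (intro tendsto_intros lim)
  hence "f m0 = d" using fd by (rule LIMSEQ_unique)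
  ultimately show ?thesis using low that unfolding f_def by auto
qed

lemma closest_point_orthogonal:
  fixes x :: "'a::complex_hilbert"
  assumes M: "csubspace M" and m: "m \<in> M" and closest: "\<And>y. y \<in> M \<Longrightarrow> norm (x - m) \<le> norm (x - y)"
    and y: "y \<in> M"
  shows "cinner y (x - m) = 0"
proof -
  define z where "z = x - m"
  define c where "c = cinner y z"
  define q where "q = (cmod c)\<^sup>2"
  define t where "t = 1 / ((norm y)\<^sup>2 + 1)"
  have "0 < (norm y)\<^sup>2 + 1" by (simp add: add_nonneg_pos)
  hence t: "t > 0" "t * (norm y)\<^sup>2 < 1" unfolding t_def by (simp_all add: field_simps)
  have cc: "cnj c * c = of_real q" unfolding q_def using complex_norm_square[of c] by (simp add: mult.commute)
  define s where "s = complex_of_real t * c"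
  have "m + scaleC s y \<in> M" using M m y unfolding csubspace_def by blast
  hence le: "(norm z)\<^sup>2 \<le> (norm (z - scaleC s y))\<^sup>2"
    using closest unfolding z_def by (simp add: algebra_simps power_mono)
  have "complex_of_real ((norm (z - scaleC s y))\<^sup>2) = cinner (z - scaleC s y) (z - scaleC s y)"
    by (simp add: cinner_self)
  also have "\<dots> = cinner z z - s * cnj c - cnj s * c + cnj s * s * cinner y y"
    using cinner_commute[of z y]
    by (simp add: c_def cinner_diff_left cinner_diff_right cinner_scaleC_left cinner_scaleC_right
        algebra_simps)
  also have "\<dots> = complex_of_real ((norm z)\<^sup>2 - 2 * t * q + t\<^sup>2 * q * (norm y)\<^sup>2)"
  proof -
    have ccw: "c * (cnj c * w) = of_real q * w" for w
      using cc by (simp add: mult.assoc[symmetric] mult.commute)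
    show ?thesis unfolding s_def using cc by (simp add: cinner_self algebra_simps power2_eq_square ccw)
  qed
  finally have "(norm (z - scaleC s y))\<^sup>2 = (norm z)\<^sup>2 - 2 * t * q + t\<^sup>2 * q * (norm y)\<^sup>2"
    by (simp only: of_real_eq_iff)
  hence "0 \<le> t * q * (t * (norm y)\<^sup>2 - 2)" using le by (simp add: algebra_simps power2_eq_square)
  hence "q \<le> 0" using t by (simp add: zero_le_mult_iff mult_le_0_iff)
  thus ?thesis unfolding q_def c_def z_def by simp
qed

lemma closed_csubspace_eq_UNIV:
  fixes M :: "'a::complex_hilbert set"
  assumes "csubspace M" "closed M" and orth: "\<And>z. \<forall>m\<in>M. cinner m z = 0 \<Longrightarrow> z = 0"
  shows "M = UNIV"
proof -
  have "x \<in> M" for x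
  proof -
    obtain m where m: "m \<in> M" "\<And>y. y \<in> M \<Longrightarrow> norm (x - m) \<le> norm (x - y)"
      using closest_point_exists[OF assms(1,2)] by blast
    have "x - m = 0" using closest_point_orthogonal[OF assms(1) m] by (intro orth) blast
    thus ?thesis using m(1) by simp
  qed
  thus ?thesis by auto
qed

lemma closed_cinner_left_eq_0: "closed {w. cinner w (z::'a::complex_hilbert) = 0}"
  using bounded_linear.continuous_on[OF bounded_bilinear.bounded_linear_left[OF bounded_bilinear_cinner]
      continuous_on_id]
  by (intro closed_Collect_eq continuous_on_const) blast

lemma closure_csubspace_eq_UNIV:
  fixes M :: "'a::complex_hilbert set"
  assumes "csubspace M" and orth: "\<And>z. \<forall>m\<in>M. cinner m z = 0 \<Longrightarrow> z = 0"
  shows "closure M = UNIV"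
proof (rule closed_csubspace_eq_UNIV[OF csubspace_closure[OF assms(1)] closed_closure])
  fix z assume "\<forall>m\<in>closure M. cinner m z = 0"
  thus "z = 0" using orth closure_subset by blast
qed

lemma dense_orthogonal_eq_0:
  fixes v :: "'a::complex_hilbert"
  assumes "densely_defined D" "\<And>\<xi>. \<xi> \<in> D \<Longrightarrow> cinner \<xi> v = 0"
  shows "v = 0"
proof -
  have "closure D \<subseteq> {w. cinner w v = 0}"
    using assms(2) by (intro closure_minimal closed_cinner_left_eq_0) blast
  hence "cinner v v = 0" using assms(1) unfolding densely_defined_def by blast
  thus ?thesis by simp
qed

section \<open>Polynomials with nonnegative coefficients in a positive operator\<close>

text \<open>A polynomial in \<open>C\<close> is encoded as the list of its terms \<open>(a, k)\<close>, standing for \<open>a C\<^sup>k\<close>, so that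
  sums and products of polynomials become list append and a list comprehension.\<close>

definition poly_op :: "('a::complex_hilbert \<Rightarrow> 'a) \<Rightarrow> (real \<times> nat) list \<Rightarrow> 'a \<Rightarrow> 'a" where
  "poly_op C ps x = (\<Sum>(a, k)\<leftarrow>ps. a *\<^sub>R (C ^^ k) x)"

definition nonneg_poly_in :: "('a::complex_hilbert \<Rightarrow> 'a) \<Rightarrow> ('a \<Rightarrow> 'a) \<Rightarrow> bool" where
  "nonneg_poly_in C T \<longleftrightarrow> (\<exists>ps. (\<forall>(a, k)\<in>set ps. 0 \<le> a) \<and> T = poly_op C ps)"

lemma poly_op_Nil [simp]: "poly_op C [] x = 0"
  by (simp add: poly_op_def)

lemma poly_op_Cons [simp]: "poly_op C ((a, k) # ps) x = a *\<^sub>R (C ^^ k) x + poly_op C ps x"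
  by (simp add: poly_op_def)

lemma poly_op_append: "poly_op C (ps @ qs) x = poly_op C ps x + poly_op C qs x"
  by (simp add: poly_op_def)

lemma poly_op_scale: "poly_op C (map (\<lambda>(a, k). (r * a, k)) ps) x = r *\<^sub>R poly_op C ps x"
  by (induction ps) (auto simp: scaleR_add_right)

lemma clinear_funpow: "clinear C \<Longrightarrow> clinear (C ^^ k)"
  by (induction k) (auto simp: clinear_def)

lemma funpow_commute_clinear:
  assumes "\<And>y. T (C y) = C (T y)" shows "T ((C ^^ k) x) = (C ^^ k) (T x)"
  using assms by (induction k) simp_all

lemma poly_op_commute:
  assumes "clinear T" "\<And>y. T (C y) = C (T y)"
  shows "T (poly_op C ps x) = poly_op C ps (T x)"
  by (induction ps)
    (auto simp: clinear_zero[OF assms(1)] clinear_add[OF assms(1)] clinear_scaleR[OF assms(1)]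
      funpow_commute_clinear[of T C, OF assms(2)])

lemma clinear_poly_op: "clinear C \<Longrightarrow> clinear (poly_op C ps)"
proof (induction ps)
  case Nil thus ?case by (simp add: clinear_def)
next
  case (Cons p ps)
  obtain a k where p: "p = (a, k)" by fastforce
  have "clinear (\<lambda>x. a *\<^sub>R (C ^^ k) x + 1 *\<^sub>R poly_op C ps x)"
    using Cons by (intro clinear_lincomb clinear_funpow)
  thus ?case by (simp add: p)
qed

lemma poly_op_compose:
  assumes "clinear C"
  shows "poly_op C [(a * b, k + l). (a, k) \<leftarrow> ps, (b, l) \<leftarrow> qs] x = poly_op C ps (poly_op C qs x)"
proof (induction ps)
  case Nil thus ?case by simp
next
  case (Cons p ps)
  obtain a k where p: "p = (a, k)" by fastforce
  have "poly_op C (map (\<lambda>(b, l). (a * b, k + l)) qs) x = a *\<^sub>R (C ^^ k) (poly_op C qs x)"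
    by (induction qs)
      (auto simp: clinear_zero[OF clinear_funpow[OF assms]] clinear_add[OF clinear_funpow[OF assms]]
        clinear_scaleR[OF clinear_funpow[OF assms]] funpow_add scaleR_add_right)
  thus ?case using Cons by (simp add: p poly_op_append)
qed

lemma hermitian_funpow: "hermitian C \<Longrightarrow> hermitian (C ^^ k)"
  unfolding hermitian_def
  by (induction k) (simp_all, metis funpow_swap1)

lemma positive_funpow:
  assumes "clinear C" "hermitian C" "positive_op C"
  shows "0 \<le> Re (cinner ((C ^^ k) x) x)"
proof -
  have "\<exists>j. k = 2 * j \<or> k = 2 * j + 1" by presburger
  then obtain j where "k = 2 * j \<or> k = 2 * j + 1" by blast
  thus ?thesis
  proof
    assume "k = 2 * j"
    hence "cinner ((C ^^ k) x) x = cinner ((C ^^ j) x) ((C ^^ j) x)"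
      using hermitian_symmetric[OF hermitian_funpow[OF assms(2)]] by (simp add: funpow_add mult_2)
    thus ?thesis by (simp add: Re_cinner_self)
  next
    assume "k = 2 * j + 1"
    hence "cinner ((C ^^ k) x) x = cinner (C ((C ^^ j) x)) ((C ^^ j) x)"
      using hermitian_symmetric[OF hermitian_funpow[OF assms(2)]]
      by (simp add: funpow_add mult_2 funpow_swap1)
    thus ?thesis using positive_opD[OF assms(3)] by simp
  qed
qed

lemma hermitian_poly_op:
  assumes "hermitian C" shows "hermitian (poly_op C ps)"
  unfolding hermitian_def
proof (intro allI)
  fix x y
  show "cinner (poly_op C ps x) y = cinner x (poly_op C ps y)"
    by (induction ps)
      (auto simp: cinner_add_left cinner_add_right cinner_scaleR_left cinner_scaleR_right
        hermitian_symmetric[OF hermitian_funpow[OF assms]])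
qed

lemma positive_poly_op:
  assumes "clinear C" "hermitian C" "positive_op C" "\<forall>(a, k)\<in>set ps. 0 \<le> a"
  shows "positive_op (poly_op C ps)"
  unfolding positive_op_def
proof
  fix x
  show "0 \<le> Re (cinner (poly_op C ps x) x)"
    using assms(4)
    by (induction ps)
      (auto simp: cinner_add_left cinner_scaleR_left intro!: add_nonneg_nonneg
        mult_nonneg_nonneg positive_funpow[OF assms(1-3)])
qed

locale positive_hermitian =
  fixes C :: "'a::complex_hilbert \<Rightarrow> 'a"
  assumes clinear: "clinear C" and hermitian: "hermitian C" and positive: "positive_op C"
begin

lemma nonneg_poly_in_zero: "nonneg_poly_in C (\<lambda>x. 0)"
  unfolding nonneg_poly_in_def by (intro exI[of _ "[]"]) auto

lemma nonneg_poly_in_self: "nonneg_poly_in C C"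
  unfolding nonneg_poly_in_def by (intro exI[of _ "[(1, 1)]"]) (auto simp: poly_op_def)

lemma nonneg_poly_in_add:
  assumes "nonneg_poly_in C T" "nonneg_poly_in C U" shows "nonneg_poly_in C (\<lambda>x. T x + U x)"
proof -
  obtain ps qs where ps: "\<forall>(a, k)\<in>set ps. 0 \<le> a" "T = poly_op C ps"
    and qs: "\<forall>(b, l)\<in>set qs. 0 \<le> b" "U = poly_op C qs"
    using assms unfolding nonneg_poly_in_def by blast
  show ?thesis unfolding nonneg_poly_in_def
    using ps qs by (intro exI[of _ "ps @ qs"]) (auto simp: poly_op_append)
qed

lemma nonneg_poly_in_scale:
  assumes "0 \<le> r" "nonneg_poly_in C T" shows "nonneg_poly_in C (\<lambda>x. r *\<^sub>R T x)"
proof -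
  obtain ps where ps: "\<forall>(a, k)\<in>set ps. 0 \<le> a" "T = poly_op C ps"
    using assms(2) unfolding nonneg_poly_in_def by blast
  show ?thesis unfolding nonneg_poly_in_def
    using ps assms(1) by (intro exI[of _ "map (\<lambda>(a, k). (r * a, k)) ps"]) (auto simp: poly_op_scale)
qed

lemma nonneg_poly_in_compose:
  assumes "nonneg_poly_in C T" "nonneg_poly_in C U" shows "nonneg_poly_in C (\<lambda>x. T (U x))"
proof -
  obtain ps qs where ps: "\<forall>(a, k)\<in>set ps. 0 \<le> a" "T = poly_op C ps"
    and qs: "\<forall>(b, l)\<in>set qs. 0 \<le> b" "U = poly_op C qs"
    using assms unfolding nonneg_poly_in_def by blast
  show ?thesis unfolding nonneg_poly_in_def
  proof (intro exI conjI)
    show "\<forall>(c, m)\<in>set [(a * b, k + l). (a, k) \<leftarrow> ps, (b, l) \<leftarrow> qs]. 0 \<le> c"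
      using ps(1) qs(1) by fastforce
    show "(\<lambda>x. T (U x)) = poly_op C [(a * b, k + l). (a, k) \<leftarrow> ps, (b, l) \<leftarrow> qs]"
      using poly_op_compose[OF clinear, where ps=ps and qs=qs] by (simp add: ps(2) qs(2) fun_eq_iff)
  qed
qed

lemma nonneg_poly_in_clinear: "nonneg_poly_in C T \<Longrightarrow> clinear T"
  unfolding nonneg_poly_in_def using clinear_poly_op[OF clinear] by blast

lemma nonneg_poly_in_hermitian: "nonneg_poly_in C T \<Longrightarrow> hermitian T"
  unfolding nonneg_poly_in_def using hermitian_poly_op[OF hermitian] by blast

lemma nonneg_poly_in_positive: "nonneg_poly_in C T \<Longrightarrow> positive_op T"
  unfolding nonneg_poly_in_def using positive_poly_op[OF clinear hermitian positive] by blast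

lemma nonneg_poly_in_commute:
  assumes "nonneg_poly_in C T" "clinear U" "\<And>y. U (C y) = C (U y)"
  shows "U (T x) = T (U x)"
  using assms poly_op_commute unfolding nonneg_poly_in_def by blast

lemma nonneg_poly_in_commute_poly:
  assumes "nonneg_poly_in C T" "nonneg_poly_in C U" shows "U (T x) = T (U x)"
proof (rule nonneg_poly_in_commute[OF assms(1) nonneg_poly_in_clinear[OF assms(2)]])
  show "U (C y) = C (U y)" for y
    using nonneg_poly_in_commute[OF assms(2) clinear] by simp
qed

end

section \<open>The positive square root\<close>

locale positive_contraction = positive_hermitian +
  assumes contraction: "\<And>x. norm (C x) \<le> norm x"
begin

primrec sqrt_iter :: "nat \<Rightarrow> 'a \<Rightarrow> 'a" where
  "sqrt_iter 0 = (\<lambda>x. 0)"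
| "sqrt_iter (Suc n) = (\<lambda>x. (1/2) *\<^sub>R (C x + sqrt_iter n (sqrt_iter n x)))"

declare sqrt_iter.simps(2) [simp del]

lemma sqrt_iter_Suc: "sqrt_iter (Suc n) x = (1/2) *\<^sub>R (C x + sqrt_iter n (sqrt_iter n x))"
  by (simp add: sqrt_iter.simps(2))

lemma nonneg_poly_in_sqrt_iter: "nonneg_poly_in C (sqrt_iter n)"
proof (induction n)
  case 0 thus ?case by (simp add: nonneg_poly_in_zero)
next
  case (Suc n)
  show ?case unfolding sqrt_iter.simps(2)
    using nonneg_poly_in_scale[OF _ nonneg_poly_in_add[OF nonneg_poly_in_self
        nonneg_poly_in_compose[OF Suc Suc]], of "1/2"] by simp
qed

lemma clinear_sqrt_iter: "clinear (sqrt_iter n)"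
  by (rule nonneg_poly_in_clinear[OF nonneg_poly_in_sqrt_iter])

lemma nonneg_poly_in_sqrt_iter_increment: "nonneg_poly_in C (\<lambda>x. sqrt_iter (Suc n) x - sqrt_iter n x)"
proof (induction n)
  case 0
  show ?case using nonneg_poly_in_scale[OF _ nonneg_poly_in_self, of "1/2"] by (simp add: sqrt_iter_Suc)
next
  case (Suc n)
  let ?Y1 = "sqrt_iter (Suc n)" and ?Y0 = "sqrt_iter n"
  have commute: "?Y1 (?Y0 x) = ?Y0 (?Y1 x)" for x
    by (rule nonneg_poly_in_commute_poly[OF nonneg_poly_in_sqrt_iter nonneg_poly_in_sqrt_iter])
  have "sqrt_iter (Suc (Suc n)) x - ?Y1 x = (1/2) *\<^sub>R (?Y1 (?Y1 x + ?Y0 x) - ?Y0 (?Y1 x + ?Y0 x))" for x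
  proof -
    have "sqrt_iter (Suc (Suc n)) x - ?Y1 x
        = (1/2) *\<^sub>R (C x + ?Y1 (?Y1 x)) - (1/2) *\<^sub>R (C x + ?Y0 (?Y0 x))"
      using sqrt_iter_Suc[of "Suc n" x] sqrt_iter_Suc[of n x] by (rule arg_cong2[where f=minus])
    also have "\<dots> = (1/2) *\<^sub>R (?Y1 (?Y1 x) - ?Y0 (?Y0 x))" by (simp add: algebra_simps)
    also have "?Y1 (?Y1 x) - ?Y0 (?Y0 x) = ?Y1 (?Y1 x + ?Y0 x) - ?Y0 (?Y1 x + ?Y0 x)"
      using commute[of x] by (simp add: clinear_add[OF clinear_sqrt_iter])
    finally show ?thesis .
  qed
  moreover have "nonneg_poly_in C (\<lambda>x. (1/2) *\<^sub>R (?Y1 (?Y1 x + ?Y0 x) - ?Y0 (?Y1 x + ?Y0 x)))"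
    using nonneg_poly_in_scale[OF _ nonneg_poly_in_compose[OF Suc nonneg_poly_in_add[OF
          nonneg_poly_in_sqrt_iter nonneg_poly_in_sqrt_iter]], of "1/2"] by simp
  ultimately show ?case by simp
qed

lemma norm_sqrt_iter: "norm (sqrt_iter n x) \<le> norm x"
proof (induction n arbitrary: x)
  case 0 thus ?case by simp
next
  case (Suc n)
  have "norm (sqrt_iter (Suc n) x) \<le> (1/2) * (norm (C x) + norm (sqrt_iter n (sqrt_iter n x)))"
    by (simp add: sqrt_iter_Suc norm_triangle_ineq)
  also have "\<dots> \<le> (1/2) * (norm x + norm x)"
    using contraction[of x] Suc[of "sqrt_iter n x"] Suc[of x] by simp
  finally show ?case by simp
qed

lemma sqrt_iter_mono: "n \<le> m \<Longrightarrow> Re (cinner (sqrt_iter n x) x) \<le> Re (cinner (sqrt_iter m x) x)"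
proof (induction m rule: dec_induct)
  case (step m)
  have "0 \<le> Re (cinner (sqrt_iter (Suc m) x - sqrt_iter m x) x)"
    using positive_opD[OF nonneg_poly_in_positive[OF nonneg_poly_in_sqrt_iter_increment], of m x]
    by simp
  thus ?case using step.IH by (simp add: cinner_diff_left)
qed simp

lemma norm_sqrt_iter_diff:
  assumes "n \<le> m"
  shows "(norm (sqrt_iter m x - sqrt_iter n x))\<^sup>2
    \<le> 2 * (Re (cinner (sqrt_iter m x) x) - Re (cinner (sqrt_iter n x) x))"
proof -
  define P where "P y = sqrt_iter m y - sqrt_iter n y" for y
  have "clinear P" unfolding P_def clinear_def
    by (simp add: clinear_add[OF clinear_sqrt_iter] clinear_scaleC[OF clinear_sqrt_iter] scaleC_diff_right)
  moreover have "hermitian P" unfolding P_def hermitian_def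
    using nonneg_poly_in_hermitian[OF nonneg_poly_in_sqrt_iter]
    by (simp add: hermitian_symmetric cinner_diff_left cinner_diff_right)
  moreover have "positive_op P" unfolding P_def positive_op_def
    using sqrt_iter_mono[OF assms] by (simp add: cinner_diff_left)
  moreover have "norm (P y) \<le> 2 * norm y" for y
    unfolding P_def using norm_sqrt_iter[of m y] norm_sqrt_iter[of n y]
      norm_triangle_ineq4[of "sqrt_iter m y" "sqrt_iter n y"] by simp
  ultimately have "(norm (P x))\<^sup>2 \<le> 2 * Re (cinner (P x) x)" by (rule positive_op_norm_bound)
  thus ?thesis unfolding P_def by (simp add: cinner_diff_left)
qed

lemma Cauchy_sqrt_iter: "Cauchy (\<lambda>n. sqrt_iter n x)"
proof -
  define a where "a n = Re (cinner (sqrt_iter n x) x)" for n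
  have "incseq a" unfolding a_def incseq_def using sqrt_iter_mono by blast
  moreover have "a n \<le> (norm x)\<^sup>2" for n
    unfolding a_def using Re_cinner_le_norm_mult[of "sqrt_iter n x" x] norm_sqrt_iter[of n x]
    by (simp add: power2_eq_square mult_right_mono order_trans)
  ultimately obtain L where L: "a \<longlonglongrightarrow> L" using incseq_convergent by blast
  have le: "(dist (sqrt_iter m x) (sqrt_iter n x))\<^sup>2 \<le> 2 * \<bar>a m - L\<bar> + 2 * \<bar>a n - L\<bar>"
    if "n \<le> m" for m n
  proof -
    have "(dist (sqrt_iter m x) (sqrt_iter n x))\<^sup>2 \<le> 2 * (a m - a n)"
      using norm_sqrt_iter_diff[OF that, of x] unfolding a_def dist_norm .
    also have "\<dots> \<le> 2 * \<bar>a m - L\<bar> + 2 * \<bar>a n - L\<bar>" by (smt (verit))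
    finally show ?thesis .
  qed
  show ?thesis
  proof (rule Cauchy_if_dist_squared_le)
    have "(\<lambda>n. 2 * \<bar>a n - L\<bar>) \<longlonglongrightarrow> 2 * \<bar>L - L\<bar>" by (intro tendsto_intros L)
    thus "(\<lambda>n. 2 * \<bar>a n - L\<bar>) \<longlonglongrightarrow> 0" by simp
    show "(dist (sqrt_iter m x) (sqrt_iter n x))\<^sup>2 \<le> 2 * \<bar>a m - L\<bar> + 2 * \<bar>a n - L\<bar>" for m n
    proof (cases "n \<le> m")
      case False
      hence "(dist (sqrt_iter n x) (sqrt_iter m x))\<^sup>2 \<le> 2 * \<bar>a n - L\<bar> + 2 * \<bar>a m - L\<bar>"
        by (intro le) simp
      thus ?thesis by (simp only: dist_commute add.commute)
    qed (rule le)
  qed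
qed

definition sqrt_iter_lim :: "'a \<Rightarrow> 'a" where
  "sqrt_iter_lim x = lim (\<lambda>n. sqrt_iter n x)"

lemma sqrt_iter_tendsto: "(\<lambda>n. sqrt_iter n x) \<longlonglongrightarrow> sqrt_iter_lim x"
  unfolding sqrt_iter_lim_def using Cauchy_sqrt_iter Cauchy_convergent_iff convergent_LIMSEQ_iff by blast

lemma norm_sqrt_iter_lim: "norm (sqrt_iter_lim x) \<le> norm x"
  using norm_sqrt_iter by (intro LIMSEQ_le_const2[OF tendsto_norm[OF sqrt_iter_tendsto]]) blast

lemma bounded_clinear_sqrt_iter_lim: "bounded_clinear_op sqrt_iter_lim"
  unfolding bounded_clinear_op_iff clinear_def
proof (intro conjI allI exI)
  fix x y c
  have "(\<lambda>n. sqrt_iter n (x + y)) \<longlonglongrightarrow> sqrt_iter_lim x + sqrt_iter_lim y"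
    using tendsto_add[OF sqrt_iter_tendsto sqrt_iter_tendsto] by (simp add: clinear_add[OF clinear_sqrt_iter])
  thus "sqrt_iter_lim (x + y) = sqrt_iter_lim x + sqrt_iter_lim y"
    using sqrt_iter_tendsto LIMSEQ_unique by blast
  have "(\<lambda>n. sqrt_iter n (scaleC c x)) \<longlonglongrightarrow> scaleC c (sqrt_iter_lim x)"
    using bounded_clinear_op_tendsto[OF bounded_clinear_op_scaleC sqrt_iter_tendsto]
    by (simp add: clinear_scaleC[OF clinear_sqrt_iter])
  thus "sqrt_iter_lim (scaleC c x) = scaleC c (sqrt_iter_lim x)"
    using sqrt_iter_tendsto LIMSEQ_unique by blast
  show "norm (sqrt_iter_lim x) \<le> norm x * 1" using norm_sqrt_iter_lim by simp
qed

lemma hermitian_sqrt_iter_lim: "hermitian sqrt_iter_lim"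
  unfolding hermitian_def
proof (intro allI)
  fix x y
  have "(\<lambda>n. cinner (sqrt_iter n x) y) \<longlonglongrightarrow> cinner (sqrt_iter_lim x) y"
    by (rule tendsto_cinner[OF sqrt_iter_tendsto tendsto_const])
  moreover have "(\<lambda>n. cinner (sqrt_iter n x) y) \<longlonglongrightarrow> cinner x (sqrt_iter_lim y)"
    using tendsto_cinner[OF tendsto_const sqrt_iter_tendsto]
      hermitian_symmetric[OF nonneg_poly_in_hermitian[OF nonneg_poly_in_sqrt_iter]] by simp
  ultimately show "cinner (sqrt_iter_lim x) y = cinner x (sqrt_iter_lim y)" by (rule LIMSEQ_unique)
qed

lemma sqrt_iter_lim_fixpoint: "sqrt_iter_lim x = (1/2) *\<^sub>R (C x + sqrt_iter_lim (sqrt_iter_lim x))"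
proof -
  let ?Y = sqrt_iter_lim
  have "(\<lambda>n. sqrt_iter n (sqrt_iter n x - ?Y x)) \<longlonglongrightarrow> 0"
  proof (rule Lim_null_comparison)
    show "\<forall>\<^sub>F n in sequentially. norm (sqrt_iter n (sqrt_iter n x - ?Y x)) \<le> norm (sqrt_iter n x - ?Y x)"
      using norm_sqrt_iter by simp
    show "(\<lambda>n. norm (sqrt_iter n x - ?Y x)) \<longlonglongrightarrow> 0"
      using sqrt_iter_tendsto[of x] by (simp add: LIM_zero_iff tendsto_norm_zero)
  qed
  moreover have "(\<lambda>n. sqrt_iter n (?Y x) - ?Y (?Y x)) \<longlonglongrightarrow> 0"
    using sqrt_iter_tendsto[of "?Y x"] by (simp add: LIM_zero_iff)
  ultimately have "(\<lambda>n. sqrt_iter n (sqrt_iter n x - ?Y x) + (sqrt_iter n (?Y x) - ?Y (?Y x))) \<longlonglongrightarrow> 0"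
    by (rule tendsto_add_zero)
  hence "(\<lambda>n. sqrt_iter n (sqrt_iter n x)) \<longlonglongrightarrow> ?Y (?Y x)"
    by (simp add: clinear_diff[OF clinear_sqrt_iter] LIM_zero_iff)
  hence "(\<lambda>n. sqrt_iter (Suc n) x) \<longlonglongrightarrow> (1/2) *\<^sub>R (C x + ?Y (?Y x))"
    unfolding sqrt_iter_Suc by (intro tendsto_intros)
  moreover have "(\<lambda>n. sqrt_iter (Suc n) x) \<longlonglongrightarrow> ?Y x" using sqrt_iter_tendsto by (rule LIMSEQ_Suc)
  ultimately show ?thesis using LIMSEQ_unique by blast
qed

lemma sqrt_iter_lim_commute:
  assumes "bounded_clinear_op T" "\<And>y. T (C y) = C (T y)"
  shows "T (sqrt_iter_lim x) = sqrt_iter_lim (T x)"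
proof -
  have "T (sqrt_iter n x) = sqrt_iter n (T x)" for n
    using nonneg_poly_in_commute[of "sqrt_iter n" T, OF nonneg_poly_in_sqrt_iter _ assms(2)] assms(1)
    by (simp add: bounded_clinear_op_iff)
  hence "(\<lambda>n. sqrt_iter n (T x)) \<longlonglongrightarrow> T (sqrt_iter_lim x)"
    using bounded_clinear_op_tendsto[OF assms(1) sqrt_iter_tendsto[of x]] by simp
  thus ?thesis using sqrt_iter_tendsto LIMSEQ_unique by blast
qed

definition sqrt_complement :: "'a \<Rightarrow> 'a" where
  "sqrt_complement x = x - sqrt_iter_lim x"

lemma bounded_clinear_sqrt_complement: "bounded_clinear_op sqrt_complement"
  unfolding bounded_clinear_op_iff
proof (intro conjI exI allI)
  show "clinear sqrt_complement"
    using bounded_clinear_sqrt_iter_lim unfolding sqrt_complement_def bounded_clinear_op_iff clinear_def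
    by (simp add: scaleC_diff_right)
  show "norm (sqrt_complement x) \<le> norm x * 2" for x
    unfolding sqrt_complement_def
    using norm_triangle_ineq4[of x "sqrt_iter_lim x"] norm_sqrt_iter_lim[of x] by simp
qed

lemma hermitian_sqrt_complement: "hermitian sqrt_complement"
  using hermitian_sqrt_iter_lim unfolding sqrt_complement_def hermitian_def
  by (simp add: cinner_diff_left cinner_diff_right)

lemma positive_sqrt_complement: "positive_op sqrt_complement"
  unfolding positive_op_def sqrt_complement_def
proof
  fix x
  have "Re (cinner (sqrt_iter_lim x) x) \<le> norm x * norm x"
    using Re_cinner_le_norm_mult[of "sqrt_iter_lim x" x] norm_sqrt_iter_lim[of x]
    by (simp add: mult_right_mono order_trans)
  thus "0 \<le> Re (cinner (x - sqrt_iter_lim x) x)"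
    by (simp add: cinner_diff_left Re_cinner_self power2_eq_square)
qed

text \<open>Since \<open>Y = sqrt_iter_lim\<close> solves \<open>2Y = C + Y\<^sup>2\<close>, the operator \<open>I - Y\<close> squares to \<open>I - C\<close>.\<close>

lemma sqrt_complement_squared: "sqrt_complement (sqrt_complement x) = x - C x"
proof -
  let ?Y = sqrt_iter_lim
  have "sqrt_complement (sqrt_complement x) = x - 2 *\<^sub>R ?Y x + ?Y (?Y x)"
    using bounded_clinear_sqrt_iter_lim unfolding sqrt_complement_def
    by (simp add: bounded_clinear_op_iff clinear_diff algebra_simps scaleR_2)
  also have "2 *\<^sub>R ?Y x = C x + ?Y (?Y x)"
    using arg_cong[OF sqrt_iter_lim_fixpoint[of x], of "scaleR 2"] by simp
  finally show ?thesis by simp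
qed

lemma sqrt_complement_commute:
  assumes "bounded_clinear_op T" "\<And>y. T (C y) = C (T y)"
  shows "T (sqrt_complement x) = sqrt_complement (T x)"
  using assms unfolding sqrt_complement_def
  by (simp add: bounded_clinear_op_iff clinear_diff sqrt_iter_lim_commute[OF assms])

end

lemma positive_contraction_complement:
  assumes L: "clinear G" and H: "hermitian G" and P: "positive_op G" and N: "\<And>x. norm (G x) \<le> norm x"
  shows "positive_contraction (\<lambda>x. x - G x)"
proof
  show "clinear (\<lambda>x. x - G x)" using L unfolding clinear_def by (simp add: scaleC_diff_right)
  show "hermitian (\<lambda>x. x - G x)" using H unfolding hermitian_def by (simp add: cinner_diff_left cinner_diff_right)
  have "Re (cinner (G x) x) \<le> (norm x)\<^sup>2" for x
    using Re_cinner_le_norm_mult[of "G x" x] N[of x] by (simp add: power2_eq_square mult_right_mono order_trans)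
  thus "positive_op (\<lambda>x. x - G x)" unfolding positive_op_def by (simp add: cinner_diff_left Re_cinner_self)
  fix x
  have "Re (cinner x (G x)) = Re (cinner (G x) x)" using hermitian_symmetric[OF H] by metis
  hence "(norm (x - G x))\<^sup>2 = (norm x)\<^sup>2 - 2 * Re (cinner (G x) x) + (norm (G x))\<^sup>2"
    by (simp add: Re_cinner_self[symmetric] cinner_diff_left cinner_diff_right)
  also have "(norm (G x))\<^sup>2 \<le> 1 * Re (cinner (G x) x)" by (rule positive_op_norm_bound[OF L H P]) (simp add: N)
  finally have "(norm (x - G x))\<^sup>2 \<le> (norm x)\<^sup>2" using positive_opD[OF P, of x] by linarith
  thus "norm (x - G x) \<le> norm x" by (rule power2_le_imp_le) simp
qed

text \<open>With \<open>k > \<parallel>G\<parallel>\<close>, \<open>C = I - G/k\<close> is a positive contraction and \<open>\<surd>k (I - Y)\<close> is the root.\<close>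

lemma positive_sqrt_exists:
  assumes B: "bounded_clinear_op G" and H: "hermitian G" and P: "positive_op G"
  obtains S where "bounded_clinear_op S" "hermitian S" "positive_op S" "\<And>x. S (S x) = G x"
    "\<And>T x. bounded_clinear_op T \<Longrightarrow> (\<And>y. T (G y) = G (T y)) \<Longrightarrow> T (S x) = S (T x)"
proof -
  obtain K where K: "\<And>x. norm (G x) \<le> norm x * K" using B unfolding bounded_clinear_op_iff by blast
  define k where "k = max K 0 + 1"
  have k: "k > 0" unfolding k_def by simp
  define G' where "G' x = (1/k) *\<^sub>R G x" for x
  have "bounded_clinear_op G'" unfolding G'_def by (rule bounded_clinear_op_scaleR_op[OF B])
  hence "clinear G'" by (simp add: bounded_clinear_op_iff)
  moreover have "hermitian G'" unfolding G'_def by (rule hermitian_scaleR_op[OF H])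
  moreover have "positive_op G'" unfolding G'_def using k by (intro positive_op_scaleR_op[OF _ P]) simp
  moreover have "norm (G' x) \<le> norm x" for x
  proof -
    have "norm (G x) \<le> norm x * k" using K[of x] unfolding k_def
      by (meson max.cobounded1 less_add_one mult_left_mono norm_ge_zero order_trans less_imp_le)
    thus ?thesis unfolding G'_def using k by (simp add: field_simps)
  qed
  ultimately interpret positive_contraction "\<lambda>x. x - G' x" by (rule positive_contraction_complement)
  define S where "S x = sqrt k *\<^sub>R sqrt_complement x" for x
  have L0: "clinear sqrt_complement"
    using bounded_clinear_sqrt_complement by (simp add: bounded_clinear_op_iff)
  show ?thesis
  proof
    show "bounded_clinear_op S" "hermitian S" "positive_op S" unfolding S_def using k
      by (simp_all add: bounded_clinear_op_scaleR_op[OF bounded_clinear_sqrt_complement]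
          hermitian_scaleR_op[OF hermitian_sqrt_complement] positive_op_scaleR_op[OF _ positive_sqrt_complement])
    show "S (S x) = G x" for x
    proof -
      have "S (S x) = k *\<^sub>R sqrt_complement (sqrt_complement x)"
        using k unfolding S_def by (simp add: clinear_scaleR[OF L0])
      also have "\<dots> = G x" using k by (simp add: sqrt_complement_squared) (simp add: G'_def)
      finally show ?thesis .
    qed
    fix T x assume T: "bounded_clinear_op T" "\<And>y. T (G y) = G (T y)"
    have "T (y - G' y) = T y - G' (T y)" for y
      using T unfolding G'_def by (simp add: bounded_clinear_op_iff clinear_diff clinear_scaleR)
    thus "T (S x) = S (T x)"
      using T(1) sqrt_complement_commute[OF T(1)] unfolding S_def
      by (simp add: bounded_clinear_op_iff clinear_scaleR)
  qed
qed

lemma positive_op_form_eq_0: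
  assumes "bounded_clinear_op S" "hermitian S" "positive_op S" "Re (cinner (S d) d) = 0"
  shows "S d = 0"
proof -
  obtain K where L: "clinear S" and K: "\<And>y. norm (S y) \<le> K * norm y"
    using assms(1) unfolding bounded_clinear_op_iff by (metis mult.commute)
  have "(norm (S d))\<^sup>2 \<le> K * Re (cinner (S d) d)"
    by (rule positive_op_norm_bound[OF L assms(2,3) K])
  thus ?thesis using assms(4) by simp
qed

lemma positive_sqrt_unique:
  assumes S: "bounded_clinear_op S" "hermitian S" "positive_op S"
    and T: "bounded_clinear_op T" "hermitian T" "positive_op T"
    and squares: "\<And>x. S (S x) = T (T x)" and commute: "\<And>x. T (S x) = S (T x)"
  shows "S = T"
proof
  fix x
  have LS: "clinear S" and LT: "clinear T" using S(1) T(1) by (simp_all add: bounded_clinear_op_iff)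
  define d where "d = S x - T x"
  have "S d + T d = 0"
    unfolding d_def by (simp add: clinear_diff[OF LS] clinear_diff[OF LT] squares commute)
  hence "Re (cinner (S d) d) + Re (cinner (T d) d) = 0"
    by (metis cinner_add_left cinner_zero_left plus_complex.sel(1) zero_complex.sel(1))
  with positive_opD[OF S(3), of d] positive_opD[OF T(3), of d]
  have Sd: "Re (cinner (S d) d) = 0" and Td: "Re (cinner (T d) d) = 0" by linarith+
  hence "S d = 0" "T d = 0" using positive_op_form_eq_0 S T by blast+
  hence "cinner d d = 0"
    unfolding d_def using hermitian_symmetric[OF S(2)] hermitian_symmetric[OF T(2)]
    by (simp add: cinner_diff_left)
  thus "S x = T x" unfolding d_def by simp
qed

lemma op_sqrt:
  assumes "bounded_clinear_op G" "hermitian G" "positive_op G"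
  shows "bounded_clinear_op (op_sqrt G)" "hermitian (op_sqrt G)" "positive_op (op_sqrt G)"
    and "op_sqrt G (op_sqrt G x) = G x"
proof -
  let ?P = "\<lambda>S. bounded_clinear_op S \<and> (\<forall>x y. cinner (S x) y = cinner x (S y))
      \<and> (\<forall>x. 0 \<le> Re (cinner (S x) x)) \<and> (\<forall>x. S (S x) = G x)"
  have "\<exists>!S. ?P S"
  proof -
    obtain S where S: "bounded_clinear_op S" "hermitian S" "positive_op S" "\<And>x. S (S x) = G x"
      and commute: "\<And>T x. bounded_clinear_op T \<Longrightarrow> (\<And>y. T (G y) = G (T y)) \<Longrightarrow> T (S x) = S (T x)"
      using positive_sqrt_exists[OF assms] by blast
    show ?thesis
    proof (rule ex1I[of _ S])
      show "?P S" using S unfolding hermitian_def positive_op_def by blast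
      fix T assume "?P T"
      hence T: "bounded_clinear_op T" "hermitian T" "positive_op T" "\<And>x. T (T x) = G x"
        unfolding hermitian_def positive_op_def by blast+
      have "T (G y) = G (T y)" for y by (metis T(4))
      thus "T = S" using positive_sqrt_unique[OF T(1-3) S(1-3)] T(4) S(4) commute[OF T(1)] by metis
    qed
  qed
  hence "?P (op_sqrt G)" unfolding op_sqrt_def by (rule theI')
  thus "bounded_clinear_op (op_sqrt G)" "hermitian (op_sqrt G)" "positive_op (op_sqrt G)"
    "op_sqrt G (op_sqrt G x) = G x" unfolding hermitian_def positive_op_def by blast+
qed

section \<open>Adjoints and self-adjoint operators\<close>

lemma op_graph_iff: "(u, v) \<in> op_graph D f \<longleftrightarrow> u \<in> D \<and> v = f u"
  unfolding op_graph_def by auto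

lemma linear_op_diff:
  assumes "linear_op D T" "x \<in> D" "y \<in> D"
  shows "x - y \<in> D" "T (x - y) = T x - T y"
proof -
  have neg: "- y \<in> D" "T (- y) = - T y"
    using assms(1,3) scaleC_minus_one[of y] scaleC_minus_one[of "T y"]
    unfolding linear_op_def csubspace_def by metis+
  moreover have "x + - y \<in> D" "T (x + - y) = T x + T (- y)"
    using assms(1,2) neg(1) unfolding linear_op_def csubspace_def by blast+
  ultimately show "x - y \<in> D" "T (x - y) = T x - T y" by simp_all
qed

lemma linear_op_zero: "linear_op D T \<Longrightarrow> T 0 = 0"
  using linear_op_diff[of D T 0 0] unfolding linear_op_def csubspace_def by simp

lemma adj_graph_unique:
  assumes "densely_defined D" "(\<eta>, z1) \<in> adj_graph D f" "(\<eta>, z2) \<in> adj_graph D f"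
  shows "z1 = z2"
proof -
  have "z1 - z2 = 0"
    using assms by (intro dense_orthogonal_eq_0[OF assms(1)]) (simp add: adj_graph_def cinner_diff_right)
  thus ?thesis by simp
qed

lemma adj_eq: "densely_defined D \<Longrightarrow> (\<eta>, z) \<in> adj_graph D f \<Longrightarrow> adj D f \<eta> = z"
  unfolding adj_def using adj_graph_unique by blast

lemma adj_in_adj_graph: "densely_defined D \<Longrightarrow> \<eta> \<in> adj_dom D f \<Longrightarrow> (\<eta>, adj D f \<eta>) \<in> adj_graph D f"
  unfolding adj_dom_def using adj_eq by force

lemma dom_Ginv_adj_eq_adj_dom:
  "adj D f ` adj_dom D f \<subseteq> range G \<Longrightarrow> dom_Ginv_adj G D f = adj_dom D f"
  unfolding dom_Ginv_adj_def by blast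

lemma closed_adj_graph: "closed (adj_graph D f)"
proof -
  have "adj_graph D f = (\<Inter>\<xi>\<in>D. {p. cinner (f \<xi>) (fst p) - cinner \<xi> (snd p) = 0})"
    unfolding adj_graph_def by auto
  moreover have "closed {p. cinner (f \<xi>) (fst p) - cinner \<xi> (snd p) = 0}" for \<xi>
    by (intro closed_Collect_eq continuous_intros continuous_on_const
        bounded_linear.continuous_on[OF bounded_bilinear.bounded_linear_right[OF bounded_bilinear_cinner]])
  ultimately show ?thesis by auto
qed

lemma adj_graph_add:
  "(u, v) \<in> adj_graph D f \<Longrightarrow> (u', v') \<in> adj_graph D f \<Longrightarrow> (u + u', v + v') \<in> adj_graph D f"
  unfolding adj_graph_def by (simp add: cinner_add_right)

lemma adj_graph_scaleC: "(u, v) \<in> adj_graph D f \<Longrightarrow> (scaleC c u, scaleC c v) \<in> adj_graph D f"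
  unfolding adj_graph_def by (simp add: cinner_scaleC_right)

lemma self_adjoint_graph_iff:
  "self_adjoint D T \<Longrightarrow> (u, v) \<in> adj_graph D T \<longleftrightarrow> u \<in> D \<and> v = T u"
  unfolding self_adjoint_def by (simp add: op_graph_iff)

lemma self_adjoint_symmetric:
  assumes "self_adjoint D T" "x \<in> D" "y \<in> D"
  shows "cinner (T x) y = cinner x (T y)"
  using assms(3) self_adjoint_graph_iff[OF assms(1), of y "T y"] assms(2) unfolding adj_graph_def by blast

lemma self_adjoint_linear_op:
  assumes "self_adjoint D T" shows "linear_op D T"
proof -
  have "(x, T x) \<in> adj_graph D T" if "x \<in> D" for x using that assms by (simp add: self_adjoint_graph_iff)
  hence "(x + y, T x + T y) \<in> adj_graph D T" "(scaleC c x, scaleC c (T x)) \<in> adj_graph D T"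
    if "x \<in> D" "y \<in> D" for x y c
    using that by (simp_all add: adj_graph_add adj_graph_scaleC)
  moreover have "0 \<in> D"
  proof -
    obtain x0 where "x0 \<in> D"
      using assms unfolding self_adjoint_def densely_defined_def by (metis closure_empty empty_not_UNIV ex_in_conv)
    hence "(x0, T x0) \<in> adj_graph D T" using assms by (simp add: self_adjoint_graph_iff)
    hence "(scaleC 0 x0, scaleC 0 (T x0)) \<in> adj_graph D T" by (rule adj_graph_scaleC)
    thus ?thesis using assms self_adjoint_graph_iff by fastforce
  qed
  ultimately show ?thesis using assms unfolding linear_op_def csubspace_def
    by (simp add: self_adjoint_graph_iff)
qed

lemma self_adjoint_norm_plus_i:
  assumes "self_adjoint D T" "x \<in> D"
  shows "(norm (T x + scaleC \<i> x))\<^sup>2 = (norm (T x))\<^sup>2 + (norm x)\<^sup>2"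
proof -
  have sym: "cinner (T x) x = cinner x (T x)" by (rule self_adjoint_symmetric[OF assms assms(2)])
  have "complex_of_real ((norm (T x + scaleC \<i> x))\<^sup>2) = cinner (T x + scaleC \<i> x) (T x + scaleC \<i> x)"
    by (simp add: cinner_self)
  also have "\<dots> = cinner (T x) (T x) + cinner x x + \<i> * cinner (T x) x - \<i> * cinner x (T x)"
    by (simp add: cinner_add_left cinner_add_right cinner_scaleC_left cinner_scaleC_right algebra_simps)
  also have "\<dots> = complex_of_real ((norm (T x))\<^sup>2 + (norm x)\<^sup>2)" by (simp add: sym cinner_self)
  finally show ?thesis by (simp only: of_real_eq_iff)
qed

lemma linear_op_plus_i: "linear_op D T \<Longrightarrow> linear_op D (\<lambda>x. T x + scaleC \<i> x)"
  unfolding linear_op_def csubspace_def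
  by (simp add: scaleC_add_right scaleC_scaleC mult.commute)

lemma csubspace_image_linear_op:
  assumes F: "linear_op D F" shows "csubspace (F ` D)"
  unfolding csubspace_def
proof (intro conjI ballI allI)
  show "0 \<in> F ` D" using F linear_op_zero[OF F] unfolding linear_op_def csubspace_def by (metis image_eqI)
next
  fix x y assume "x \<in> F ` D" "y \<in> F ` D"
  then obtain a b where "a \<in> D" "b \<in> D" "x = F a" "y = F b" by blast
  thus "x + y \<in> F ` D" using F unfolding linear_op_def csubspace_def by (metis image_eqI)
next
  fix x c assume "x \<in> F ` D"
  then obtain a where "a \<in> D" "x = F a" by blast
  thus "scaleC c x \<in> F ` D" using F unfolding linear_op_def csubspace_def by (metis image_eqI)
qed

text \<open>Since \<open>\<parallel>(T + i)x\<parallel>\<^sup>2 = \<parallel>Tx\<parallel>\<^sup>2 + \<parallel>x\<parallel>\<^sup>2\<close>, a Cauchy sequence in the range of \<open>T + i\<close>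
  comes from a Cauchy sequence in the graph of \<open>T\<close>, which is closed.\<close>

lemma closed_range_plus_i:
  assumes sa: "self_adjoint D T"
  shows "closed ((\<lambda>x. T x + scaleC \<i> x) ` D)"
  unfolding closed_sequential_limits
proof (intro allI impI, elim conjE)
  define F where "F x = T x + scaleC \<i> x" for x
  have lin: "linear_op D T" by (rule self_adjoint_linear_op[OF sa])
  fix x l assume "\<forall>n. x n \<in> F ` D" and xl: "x \<longlonglongrightarrow> l"
  hence "\<forall>n. \<exists>a. a \<in> D \<and> x n = F a" by blast
  then obtain \<xi> where \<xi>: "\<And>n. \<xi> n \<in> D" "\<And>n. x n = F (\<xi> n)" by metis
  have dist_le: "dist (\<xi> m) (\<xi> n) \<le> dist (x m) (x n)" "dist (T (\<xi> m)) (T (\<xi> n)) \<le> dist (x m) (x n)"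
    for m n
  proof -
    have "(dist (x m) (x n))\<^sup>2 = (norm (T (\<xi> m - \<xi> n)))\<^sup>2 + (norm (\<xi> m - \<xi> n))\<^sup>2"
      unfolding \<xi>(2) dist_norm F_def linear_op_diff(2)[OF linear_op_plus_i[OF lin] \<xi>(1) \<xi>(1), symmetric]
      by (rule self_adjoint_norm_plus_i[OF sa linear_op_diff(1)[OF lin \<xi>(1) \<xi>(1)]])
    hence sq: "(dist (\<xi> m) (\<xi> n))\<^sup>2 \<le> (dist (x m) (x n))\<^sup>2"
      "(dist (T (\<xi> m)) (T (\<xi> n)))\<^sup>2 \<le> (dist (x m) (x n))\<^sup>2"
      by (simp_all add: dist_norm linear_op_diff(2)[OF lin \<xi>(1) \<xi>(1)])
    show "dist (\<xi> m) (\<xi> n) \<le> dist (x m) (x n)" by (rule power2_le_imp_le[OF sq(1)]) simp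
    show "dist (T (\<xi> m)) (T (\<xi> n)) \<le> dist (x m) (x n)" by (rule power2_le_imp_le[OF sq(2)]) simp
  qed
  have "Cauchy x" using xl by (rule LIMSEQ_imp_Cauchy)
  hence "Cauchy \<xi>" "Cauchy (\<lambda>n. T (\<xi> n))"
    using Cauchy_if_dist_le[where Y=\<xi>, OF _ dist_le(1)]
      Cauchy_if_dist_le[where Y="\<lambda>n. T (\<xi> n)", OF _ dist_le(2)] by simp_all
  then obtain u v where u: "\<xi> \<longlonglongrightarrow> u" and v: "(\<lambda>n. T (\<xi> n)) \<longlonglongrightarrow> v"
    unfolding Cauchy_convergent_iff convergent_def by blast
  have "(\<xi> n, T (\<xi> n)) \<in> adj_graph D T" for n using sa \<xi>(1) by (simp add: self_adjoint_graph_iff)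
  hence "(u, v) \<in> adj_graph D T"
    by (rule closed_sequentially[OF closed_adj_graph _ tendsto_Pair[OF u v]])
  hence "u \<in> D" "v = T u" using sa by (simp_all add: self_adjoint_graph_iff)
  moreover have "x \<longlonglongrightarrow> F u" unfolding \<xi>(2) F_def
    by (intro tendsto_add bounded_clinear_op_tendsto[OF bounded_clinear_op_scaleC] u v[unfolded \<open>v = T u\<close>])
  ultimately show "l \<in> F ` D" using xl LIMSEQ_unique by blast
qed

text \<open>A vector orthogonal to \<open>R(T + i)\<close> would be an eigenvector of \<open>T = T\<^sup>*\<close> for \<open>i\<close>.\<close>

lemma self_adjoint_range_plus_i:
  assumes sa: "self_adjoint D T"
  shows "(\<lambda>x. T x + scaleC \<i> x) ` D = UNIV"
proof (rule closed_csubspace_eq_UNIV[OF csubspace_image_linear_op closed_range_plus_i[OF sa]])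
  show "linear_op D (\<lambda>x. T x + scaleC \<i> x)" by (rule linear_op_plus_i[OF self_adjoint_linear_op[OF sa]])
  fix z assume orth: "\<forall>m\<in>(\<lambda>x. T x + scaleC \<i> x) ` D. cinner m z = 0"
  have "(z, scaleC \<i> z) \<in> adj_graph D T" unfolding adj_graph_def
  proof (intro CollectI case_prodI ballI)
    fix \<xi> assume "\<xi> \<in> D"
    hence "cinner (T \<xi>) z - \<i> * cinner \<xi> z = 0"
      using orth by (simp add: cinner_add_left cinner_scaleC_left)
    thus "cinner (T \<xi>) z = cinner \<xi> (scaleC \<i> z)" by (simp add: cinner_scaleC_right)
  qed
  hence z: "z \<in> D" "T z = scaleC \<i> z" using sa by (simp_all add: self_adjoint_graph_iff)
  have "cinner (T z) z = cinner z (T z)" by (rule self_adjoint_symmetric[OF sa z(1) z(1)])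
  hence "- \<i> * cinner z z = \<i> * cinner z z" by (simp add: z(2) cinner_scaleC_left cinner_scaleC_right)
  thus "z = 0" by simp
qed

section \<open>Conjugation by the square root of a metric operator\<close>

lemma closure_image_hermitian_inj:
  assumes "clinear S" "hermitian S" "inj S" "csubspace D" "densely_defined D"
  shows "closure (S ` D) = UNIV"
proof (rule closure_csubspace_eq_UNIV[OF csubspace_image_linear_op])
  show "linear_op D S" using assms(1,4) unfolding linear_op_def clinear_def by blast
  fix z assume "\<forall>m\<in>S ` D. cinner m z = 0"
  hence "S z = 0" using hermitian_symmetric[OF assms(2)]
    by (intro dense_orthogonal_eq_0[OF assms(5)]) auto
  thus "z = 0" using assms(1,3) clinear_zero by (metis injD)
qed

locale metric_conjugation =
  fixes DA :: "'a::complex_hilbert set" and A :: "'a \<Rightarrow> 'a" and G :: "'a \<Rightarrow> 'a"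
  assumes linear_A: "linear_op DA A" and dense_DA: "densely_defined DA"
    and metric_G: "bounded_metric_op G"
begin

abbreviation S :: "'a \<Rightarrow> 'a" where "S \<equiv> op_sqrt G"

abbreviation B :: "'a \<Rightarrow> 'a" where "B \<equiv> \<lambda>y. S (A (inv_into UNIV S y))"

lemma bounded_positive_G: "bounded_clinear_op G" "hermitian G" "positive_op G"
proof -
  have pos: "x \<noteq> 0 \<Longrightarrow> 0 < Re (cinner (G x) x)" for x
    using metric_G unfolding bounded_metric_op_def by blast
  show "bounded_clinear_op G" "hermitian G"
    using metric_G unfolding bounded_metric_op_def hermitian_def by blast+
  show "positive_op G" unfolding positive_op_def
  proof
    fix x show "0 \<le> Re (cinner (G x) x)" using pos[of x] by (cases "x = 0") auto
  qed
qed

lemmas op_sqrt_G = op_sqrt[OF bounded_positive_G]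

lemma clinear_S: "clinear S"
  using op_sqrt_G(1) by (simp add: bounded_clinear_op_iff)

lemma inj_S: "inj S"
proof (rule injI)
  fix x y assume "S x = S y"
  hence "G (x - y) = 0"
    using op_sqrt_G(4)[of "x - y"] by (simp add: clinear_diff[OF clinear_S] clinear_zero[OF clinear_S])
  hence "\<not> 0 < Re (cinner (G (x - y)) (x - y))" by simp
  thus "x = y" using metric_G unfolding bounded_metric_op_def by (metis eq_iff_diff_eq_0)
qed

lemma B_S [simp]: "B (S x) = S (A x)"
  using inj_S by simp

lemma adj_graph_conj: "(u, v) \<in> adj_graph (S ` DA) B \<longleftrightarrow> (\<forall>\<xi>\<in>DA. cinner (S (A \<xi>)) u = cinner (S \<xi>) v)"
  unfolding adj_graph_def by auto

lemma adj_graph_conj_iff: "(u, v) \<in> adj_graph (S ` DA) B \<longleftrightarrow> (S u, S v) \<in> adj_graph DA A"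
  unfolding adj_graph_conj by (simp add: adj_graph_def hermitian_symmetric[OF op_sqrt_G(2)])

lemma dense_S_DA: "densely_defined (S ` DA)"
  using linear_A unfolding densely_defined_def linear_op_def
  by (intro closure_image_hermitian_inj[OF clinear_S op_sqrt_G(2) inj_S _ dense_DA]) blast

lemma self_adjoint_conj_if_adj_intertwines:
  assumes dom: "G ` DA = adj_dom DA A" and intertwines: "\<forall>\<xi>\<in>DA. adj DA A (G \<xi>) = G (A \<xi>)"
  shows "self_adjoint (S ` DA) B"
  unfolding self_adjoint_def
proof (intro conjI dense_S_DA set_eqI)
  fix p :: "'a \<times> 'a"
  obtain u v where p: "p = (u, v)" by fastforce
  have "(S u, S v) \<in> adj_graph DA A \<longleftrightarrow> u \<in> S ` DA \<and> v = B u"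
  proof
    assume uv: "(S u, S v) \<in> adj_graph DA A"
    hence "S u \<in> adj_dom DA A" unfolding adj_dom_def by blast
    then obtain \<xi> where \<xi>: "\<xi> \<in> DA" "S u = S (S \<xi>)" using dom op_sqrt_G(4) by (metis imageE)
    hence u: "u = S \<xi>" using inj_S by (simp add: inj_eq)
    have "S v = S (S (A \<xi>))"
      using adj_eq[OF dense_DA uv] intertwines \<xi> op_sqrt_G(4) by metis
    thus "u \<in> S ` DA \<and> v = B u" using u \<xi>(1) inj_S by (simp add: inj_eq)
  next
    assume "u \<in> S ` DA \<and> v = B u"
    then obtain \<xi> where \<xi>: "\<xi> \<in> DA" "u = S \<xi>" "v = S (A \<xi>)" by auto
    have "(G \<xi>, adj DA A (G \<xi>)) \<in> adj_graph DA A"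
      using dom \<xi>(1) by (intro adj_in_adj_graph[OF dense_DA]) blast
    thus "(S u, S v) \<in> adj_graph DA A" using intertwines \<xi> by (simp add: op_sqrt_G(4))
  qed
  thus "p \<in> adj_graph (S ` DA) B \<longleftrightarrow> p \<in> op_graph (S ` DA) B"
    unfolding p adj_graph_conj_iff op_graph_iff .
qed

lemma surj_S_if_self_adjoint_conj:
  assumes "self_adjoint (S ` DA) B" shows "surj S"
proof -
  have "S (A \<xi>) + scaleC \<i> (S \<xi>) \<in> range S" for \<xi>
    using clinear_add[OF clinear_S] clinear_scaleC[OF clinear_S] by (metis rangeI)
  hence "(\<lambda>y. B y + scaleC \<i> y) ` S ` DA \<subseteq> range S" by auto
  thus ?thesis using self_adjoint_range_plus_i[OF assms] by auto
qed

lemma adj_intertwines_if_self_adjoint_conj: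
  assumes sa: "self_adjoint (S ` DA) B"
  shows "G ` DA = dom_Ginv_adj G DA A" "\<forall>\<xi>\<in>DA. adj DA A (G \<xi>) = G (A \<xi>)"
proof -
  have graph: "(G \<xi>, G (A \<xi>)) \<in> adj_graph DA A" if "\<xi> \<in> DA" for \<xi>
  proof -
    have "(S \<xi>, S (A \<xi>)) \<in> adj_graph (S ` DA) B"
      using sa that by (simp add: self_adjoint_graph_iff)
    thus ?thesis by (simp add: adj_graph_conj_iff op_sqrt_G(4))
  qed
  thus adj: "\<forall>\<xi>\<in>DA. adj DA A (G \<xi>) = G (A \<xi>)" using adj_eq[OF dense_DA] by blast
  show "G ` DA = dom_Ginv_adj G DA A"
  proof
    show "G ` DA \<subseteq> dom_Ginv_adj G DA A"
      using graph adj unfolding dom_Ginv_adj_def adj_dom_def by blast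
    show "dom_Ginv_adj G DA A \<subseteq> G ` DA"
    proof
      fix \<zeta> assume "\<zeta> \<in> dom_Ginv_adj G DA A"
      then obtain w where \<zeta>: "\<zeta> \<in> adj_dom DA A" "adj DA A \<zeta> = G w"
        unfolding dom_Ginv_adj_def by blast
      obtain p where p: "\<zeta> = S p" using surj_S_if_self_adjoint_conj[OF sa] by (metis surjD)
      have "(S p, S (S w)) \<in> adj_graph DA A"
        using adj_in_adj_graph[OF dense_DA \<zeta>(1)] \<zeta>(2) p by (simp add: op_sqrt_G(4))
      hence "(p, S w) \<in> adj_graph (S ` DA) B" by (simp add: adj_graph_conj_iff)
      then obtain \<xi> where "\<xi> \<in> DA" "p = S \<xi>" using sa by (auto simp: self_adjoint_graph_iff)
      thus "\<zeta> \<in> G ` DA" using p by (simp add: op_sqrt_G(4))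
    qed
  qed
qed

lemma approx_by_S: "\<exists>\<eta>. (\<lambda>n. S (\<eta> n)) \<longlonglongrightarrow> u"
proof -
  have "u \<in> closure (S ` DA)" using dense_S_DA by (simp add: densely_defined_def)
  then obtain f where f: "\<forall>n. f n \<in> S ` DA" "f \<longlonglongrightarrow> u" unfolding closure_sequential by blast
  hence "\<forall>n. \<exists>a. f n = S a" by blast
  then obtain \<eta> where "\<And>n. f n = S (\<eta> n)" by metis
  hence "(\<lambda>n. S (\<eta> n)) = f" by auto
  thus ?thesis using f(2) by auto
qed

lemma gequiv_const_iff: "gequiv G \<eta> (\<lambda>_. \<xi>) \<longleftrightarrow> (\<lambda>n. S (\<eta> n)) \<longlonglongrightarrow> S \<xi>"
  unfolding gequiv_def by (simp add: clinear_diff[OF clinear_S] LIM_zero_iff)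

lemma gadj_graph_iff:
  assumes u: "(\<lambda>n. S (\<eta> n)) \<longlonglongrightarrow> u" and v: "(\<lambda>n. S (\<zeta> n)) \<longlonglongrightarrow> v"
  shows "(\<eta>, \<zeta>) \<in> gadj_graph G DA A \<longleftrightarrow> (u, v) \<in> adj_graph (S ` DA) B"
proof -
  have "lim (\<lambda>n. ginner G (A \<xi>) (\<eta> n)) = cinner (S (A \<xi>)) u" for \<xi>
    unfolding ginner_def by (rule limI[OF tendsto_cinner[OF tendsto_const u]])
  moreover have "lim (\<lambda>n. ginner G \<xi> (\<zeta> n)) = cinner (S \<xi>) v" for \<xi>
    unfolding ginner_def by (rule limI[OF tendsto_cinner[OF tendsto_const v]])
  moreover have "gcauchy G \<eta>" "gcauchy G \<zeta>"
    unfolding gcauchy_def using u v by (simp_all add: LIMSEQ_imp_Cauchy)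
  ultimately show ?thesis unfolding gadj_graph_def adj_graph_conj by simp
qed

text \<open>The map \<open>\<xi> \<mapsto> G\<^sup>1\<^sup>/\<^sup>2\<xi>\<close> extends to a unitary from \<open>\<H>(G)\<close> onto \<open>\<H>\<close> which carries
  \<open>A\<close> to \<open>B = G\<^sup>1\<^sup>/\<^sup>2AG\<^sup>-\<^sup>1\<^sup>/\<^sup>2\<close>; on representatives it sends a \<open>\<parallel>\<cdot>\<parallel>\<^sub>G\<close>-Cauchy sequence \<open>\<eta>\<close> to
  the limit of \<open>G\<^sup>1\<^sup>/\<^sup>2\<eta>\<^sub>n\<close>.\<close>

lemma self_adjoint_conj_if_self_adjoint_in_HG:
  assumes HG: "self_adjoint_in_HG G DA A"
  shows "self_adjoint (S ` DA) B"
  unfolding self_adjoint_def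
proof (intro conjI dense_S_DA set_eqI iffI)
  fix p assume "p \<in> adj_graph (S ` DA) B"
  moreover obtain u v where p: "p = (u, v)" by fastforce
  moreover obtain \<eta> where \<eta>: "(\<lambda>n. S (\<eta> n)) \<longlonglongrightarrow> u" using approx_by_S by blast
  moreover obtain \<zeta> where \<zeta>: "(\<lambda>n. S (\<zeta> n)) \<longlonglongrightarrow> v" using approx_by_S by blast
  ultimately have "(\<eta>, \<zeta>) \<in> gadj_graph G DA A" by (simp add: gadj_graph_iff)
  hence "\<exists>\<xi>\<in>DA. gequiv G \<eta> (\<lambda>_. \<xi>) \<and> gequiv G \<zeta> (\<lambda>_. A \<xi>)"
    using HG unfolding self_adjoint_in_HG_def by blast
  then obtain \<xi> where "\<xi> \<in> DA" "(\<lambda>n. S (\<eta> n)) \<longlonglongrightarrow> S \<xi>" "(\<lambda>n. S (\<zeta> n)) \<longlonglongrightarrow> S (A \<xi>)"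
    unfolding gequiv_const_iff by blast
  moreover from this have "u = S \<xi>" "v = S (A \<xi>)"
    using LIMSEQ_unique[OF \<eta>] LIMSEQ_unique[OF \<zeta>] by simp_all
  ultimately show "p \<in> op_graph (S ` DA) B" unfolding p op_graph_iff by simp
next
  fix p assume "p \<in> op_graph (S ` DA) B"
  then obtain \<xi> where "\<xi> \<in> DA" "p = (S \<xi>, S (A \<xi>))" unfolding op_graph_def by auto
  thus "p \<in> adj_graph (S ` DA) B"
    using HG gadj_graph_iff[OF tendsto_const tendsto_const] unfolding self_adjoint_in_HG_def by blast
qed

lemma self_adjoint_in_HG_if_self_adjoint_conj:
  assumes sa: "self_adjoint (S ` DA) B"
  shows "self_adjoint_in_HG G DA A"
  unfolding self_adjoint_in_HG_def
proof (intro conjI ballI allI impI)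
  fix \<xi> assume "\<xi> \<in> DA"
  thus "((\<lambda>_. \<xi>), (\<lambda>_. A \<xi>)) \<in> gadj_graph G DA A"
    using sa by (simp add: gadj_graph_iff[OF tendsto_const tendsto_const] self_adjoint_graph_iff)
next
  fix \<eta> \<zeta> assume h: "(\<eta>, \<zeta>) \<in> gadj_graph G DA A"
  then obtain u v where \<eta>: "(\<lambda>n. S (\<eta> n)) \<longlonglongrightarrow> u" and \<zeta>: "(\<lambda>n. S (\<zeta> n)) \<longlonglongrightarrow> v"
    unfolding gadj_graph_def gcauchy_def Cauchy_convergent_iff convergent_def by blast
  with h have "(u, v) \<in> adj_graph (S ` DA) B" by (simp add: gadj_graph_iff)
  then obtain \<xi> where "\<xi> \<in> DA" "u = S \<xi>" "v = S (A \<xi>)"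
    using sa by (auto simp: self_adjoint_graph_iff)
  thus "\<exists>\<xi>\<in>DA. gequiv G \<eta> (\<lambda>_. \<xi>) \<and> gequiv G \<zeta> (\<lambda>_. A \<xi>)"
    using \<eta> \<zeta> unfolding gequiv_const_iff by blast
qed

end

theorem proposition5p14:
  fixes DA :: "'a::complex_hilbert set" and A :: "'a \<Rightarrow> 'a" and G :: "'a \<Rightarrow> 'a"
  assumes closedA: "closed_op DA A"
    and denseA: "densely_defined DA"
    and metricG: "bounded_metric_op G"
  defines "c1 \<equiv> G ` DA = adj_dom DA A \<and> (\<forall>\<xi>\<in>DA. adj DA A (G \<xi>) = G (A \<xi>))"
    and "c2 \<equiv> self_adjoint (op_sqrt G ` DA)
               (\<lambda>y. op_sqrt G (A (inv_into UNIV (op_sqrt G) y)))"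
    and "c3 \<equiv> self_adjoint_in_HG G DA A"
    and "c4 \<equiv> G ` DA = dom_Ginv_adj G DA A \<and> (\<forall>\<xi>\<in>DA. adj DA A (G \<xi>) = G (A \<xi>))"
  shows "(c1 \<longrightarrow> c2) \<and> (c2 \<longrightarrow> c3) \<and> (c3 \<longrightarrow> c4) \<and>
         (adj DA A ` adj_dom DA A \<subseteq> range G \<longrightarrow> (c1 \<longleftrightarrow> c2) \<and> (c2 \<longleftrightarrow> c3) \<and> (c3 \<longleftrightarrow> c4))"
proof -
  interpret metric_conjugation DA A G
    \<comment> \<open>only the linearity of \<open>A\<close> is needed, not its closedness\<close>
    using closedA denseA metricG by unfold_locales (simp add: closed_op_def)
  have "c1 \<longrightarrow> c2" unfolding c1_def c2_def using self_adjoint_conj_if_adj_intertwines by blast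
  moreover have "c2 \<longleftrightarrow> c3" unfolding c2_def c3_def
    using self_adjoint_in_HG_if_self_adjoint_conj self_adjoint_conj_if_self_adjoint_in_HG by blast
  moreover have "c2 \<longrightarrow> c4" unfolding c2_def c4_def using adj_intertwines_if_self_adjoint_conj by blast
  moreover have "adj DA A ` adj_dom DA A \<subseteq> range G \<longrightarrow> c4 \<longrightarrow> c1"
    unfolding c1_def c4_def by (simp add: dom_Ginv_adj_eq_adj_dom)
  ultimately show ?thesis by argo
qed

end
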